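(* Let $R$ be a commutative ring, $M$ an $R$-module having at least one prime submodule, and $X=\mathrm{Spec}(M)$. For each $P\in X$, the stalk $\mathcal{A}_{X,P}$ of the sheaf of rings $\mathcal{A}_X$ is isomorphic to $R_{\mathfrak p}$, where $\mathfrak p=(P:M)$. Moreover, $(X,\mathcal{A}_X)$ is a locally ringed space.
   Context: For a submodule $L$ of an $R$-module $M$, $(L:M)=\{r\in R\mid rM\subseteq L\}$. A submodule $P$ of $M$ is prime if $P\neq M$ and whenever $rm\in P$ ($r\in R$, $m\in M$) then $r\in (P:M)$ or $m\in P$; then $(P:M)$ is a prime ideal. $\mathrm{Spec}(M)$ is the set of prime submodules. For $L\le M$, $V(L)=\{P\in X\mid (P:M)\supseteq (L:M)\}$; these are the closed sets of the Zariski topology on $X$. For open $U\subseteq X$, $\mathrm{Supp}(U)=\{(P:M)\mid P\in U\}$. The sheaf of rings $\mathcal{A}_X$: $\mathcal{A}_X(U)$ is the set of families $(\gamma_{\mathfrak p})_{\mathfrak p\in\mathrm{Supp}(U)}\in\prod_{\mathfrak p\in\mathrm{Supp}(U)}R_{\mathfrak p}$ such that for each $Q\in U$ there exist an open neighbourhood $W\subseteq U$ of $Q$ and $s,a\in R$ with $s\notin (P:M)$ and $\gamma_{(P:M)}=a/s$ for all $P\in W$; operations componentwise, restriction maps restrict families, $\mathcal{A}_X(\emptyset)=0$. *)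

theory Defs
  imports Complex_Main "HOL-Algebra.QuotRing"
begin

text \<open>The base ring is the type 'a (a commutative ring with 1), the module is the
type 'm with scalar multiplication sc satisfying the axioms of the HOL locale module.\<close>

definition colon :: "('a::comm_ring_1 \<Rightarrow> 'm::ab_group_add \<Rightarrow> 'm) \<Rightarrow> 'm set \<Rightarrow> 'a set" where
  "colon sc L = {r. \<forall>m. sc r m \<in> L}"

definition prime_submodule :: "('a::comm_ring_1 \<Rightarrow> 'm::ab_group_add \<Rightarrow> 'm) \<Rightarrow> 'm set \<Rightarrow> bool" where
  "prime_submodule sc P \<longleftrightarrow> module.subspace sc P \<and> P \<noteq> UNIV \<and>
     (\<forall>r m. sc r m \<in> P \<longrightarrow> r \<in> colon sc P \<or> m \<in> P)"

definition Spec :: "('a::comm_ring_1 \<Rightarrow> 'm::ab_group_add \<Rightarrow> 'm) \<Rightarrow> 'm set set" where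
  "Spec sc = {P. prime_submodule sc P}"

definition VV :: "('a::comm_ring_1 \<Rightarrow> 'm::ab_group_add \<Rightarrow> 'm) \<Rightarrow> 'm set \<Rightarrow> 'm set set" where
  "VV sc L = {P \<in> Spec sc. colon sc L \<subseteq> colon sc P}"

definition zopen :: "('a::comm_ring_1 \<Rightarrow> 'm::ab_group_add \<Rightarrow> 'm) \<Rightarrow> 'm set set \<Rightarrow> bool" where
  "zopen sc U \<longleftrightarrow> (\<exists>L. module.subspace sc L \<and> U = Spec sc - VV sc L)"

definition Supp :: "('a::comm_ring_1 \<Rightarrow> 'm::ab_group_add \<Rightarrow> 'm) \<Rightarrow> 'm set set \<Rightarrow> 'a set set" where
  "Supp sc U = colon sc ` U"

definition loc_rel :: "'a::comm_ring_1 set \<Rightarrow> (('a \<times> 'a) \<times> ('a \<times> 'a)) set" where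
  "loc_rel p = {((a, s), (b, t)). s \<notin> p \<and> t \<notin> p \<and> (\<exists>u. u \<notin> p \<and> u * (a * t - b * s) = 0)}"

definition frac :: "'a::comm_ring_1 set \<Rightarrow> 'a \<Rightarrow> 'a \<Rightarrow> ('a \<times> 'a) set" where
  "frac p a s = loc_rel p `` {(a, s)}"

definition loc_carrier :: "'a::comm_ring_1 set \<Rightarrow> ('a \<times> 'a) set set" where
  "loc_carrier p = {frac p a s | a s. s \<notin> p}"

definition loc_add :: "'a::comm_ring_1 set \<Rightarrow> ('a \<times> 'a) set \<Rightarrow> ('a \<times> 'a) set \<Rightarrow> ('a \<times> 'a) set" where
  "loc_add p x y = \<Union>{frac p (a * t + b * s) (s * t) | a s b t. (a, s) \<in> x \<and> (b, t) \<in> y}"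

definition loc_mult :: "'a::comm_ring_1 set \<Rightarrow> ('a \<times> 'a) set \<Rightarrow> ('a \<times> 'a) set \<Rightarrow> ('a \<times> 'a) set" where
  "loc_mult p x y = \<Union>{frac p (a * b) (s * t) | a s b t. (a, s) \<in> x \<and> (b, t) \<in> y}"

definition loc_ring :: "'a::comm_ring_1 set \<Rightarrow> ('a \<times> 'a) set ring" where
  "loc_ring p = \<lparr>carrier = loc_carrier p, mult = loc_mult p, one = frac p 1 1,
                 zero = frac p 0 1, add = loc_add p\<rparr>"

text \<open>A family indexed by Supp(U) is represented by a function on all ideals that is
the empty set outside Supp(U).\<close>
definition sections :: "('a::comm_ring_1 \<Rightarrow> 'm::ab_group_add \<Rightarrow> 'm) \<Rightarrow> 'm set set
    \<Rightarrow> ('a set \<Rightarrow> ('a \<times> 'a) set) set" where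
  "sections sc U = {\<gamma>. (\<forall>p. p \<notin> Supp sc U \<longrightarrow> \<gamma> p = {}) \<and>
      (\<forall>p \<in> Supp sc U. \<gamma> p \<in> loc_carrier p) \<and>
      (\<forall>Q \<in> U. \<exists>W. zopen sc W \<and> Q \<in> W \<and> W \<subseteq> U \<and>
          (\<exists>a s. \<forall>P \<in> W. s \<notin> colon sc P \<and> \<gamma> (colon sc P) = frac (colon sc P) a s))}"

definition sec_ring :: "('a::comm_ring_1 \<Rightarrow> 'm::ab_group_add \<Rightarrow> 'm) \<Rightarrow> 'm set set
    \<Rightarrow> ('a set \<Rightarrow> ('a \<times> 'a) set) ring" where
  "sec_ring sc U = \<lparr>carrier = sections sc U,
      mult = (\<lambda>\<gamma> \<delta> p. if p \<in> Supp sc U then loc_mult p (\<gamma> p) (\<delta> p) else {}),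
      one = (\<lambda>p. if p \<in> Supp sc U then frac p 1 1 else {}),
      zero = (\<lambda>p. if p \<in> Supp sc U then frac p 0 1 else {}),
      add = (\<lambda>\<gamma> \<delta> p. if p \<in> Supp sc U then loc_add p (\<gamma> p) (\<delta> p) else {})\<rparr>"

definition sec_res :: "('a::comm_ring_1 \<Rightarrow> 'm::ab_group_add \<Rightarrow> 'm) \<Rightarrow> 'm set set \<Rightarrow> 'm set set
    \<Rightarrow> ('a set \<Rightarrow> ('a \<times> 'a) set) \<Rightarrow> ('a set \<Rightarrow> ('a \<times> 'a) set)" where
  "sec_res sc U V \<gamma> = (\<lambda>p. if p \<in> Supp sc V then \<gamma> p else {})"

definition germ_rel :: "('u set \<Rightarrow> bool) \<Rightarrow> ('u set \<Rightarrow> ('s, 'e) ring_scheme)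
    \<Rightarrow> ('u set \<Rightarrow> 'u set \<Rightarrow> 's \<Rightarrow> 's) \<Rightarrow> 'u \<Rightarrow> (('u set \<times> 's) \<times> ('u set \<times> 's)) set" where
  "germ_rel Op F res x = {((U, s), (V, t)).
      Op U \<and> x \<in> U \<and> s \<in> carrier (F U) \<and> Op V \<and> x \<in> V \<and> t \<in> carrier (F V) \<and>
      (\<exists>W. Op W \<and> x \<in> W \<and> W \<subseteq> U \<inter> V \<and> res U W s = res V W t)}"

definition germ :: "('u set \<Rightarrow> bool) \<Rightarrow> ('u set \<Rightarrow> ('s, 'e) ring_scheme)
    \<Rightarrow> ('u set \<Rightarrow> 'u set \<Rightarrow> 's \<Rightarrow> 's) \<Rightarrow> 'u \<Rightarrow> 'u set \<Rightarrow> 's \<Rightarrow> ('u set \<times> 's) set" where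
  "germ Op F res x U s = germ_rel Op F res x `` {(U, s)}"

text \<open>The stalk at x: the direct limit of F(U) over open neighbourhoods U of x,
with ring operations computed on the common refinement U \<inter> V.\<close>
definition stalk :: "'u set \<Rightarrow> ('u set \<Rightarrow> bool) \<Rightarrow> ('u set \<Rightarrow> ('s, 'e) ring_scheme)
    \<Rightarrow> ('u set \<Rightarrow> 'u set \<Rightarrow> 's \<Rightarrow> 's) \<Rightarrow> 'u \<Rightarrow> ('u set \<times> 's) set ring" where
  "stalk X Op F res x = \<lparr>
     carrier = {germ Op F res x U s | U s. Op U \<and> x \<in> U \<and> s \<in> carrier (F U)},
     mult = (\<lambda>a b. \<Union>{germ Op F res x (U \<inter> V)
                 (res U (U \<inter> V) s \<otimes>\<^bsub>F (U \<inter> V)\<^esub> res V (U \<inter> V) t) | U s V t. (U, s) \<in> a \<and> (V, t) \<in> b}),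
     one = germ Op F res x X \<one>\<^bsub>F X\<^esub>,
     zero = germ Op F res x X \<zero>\<^bsub>F X\<^esub>,
     add = (\<lambda>a b. \<Union>{germ Op F res x (U \<inter> V)
                 (res U (U \<inter> V) s \<oplus>\<^bsub>F (U \<inter> V)\<^esub> res V (U \<inter> V) t) | U s V t. (U, s) \<in> a \<and> (V, t) \<in> b})\<rparr>"

definition local_ring :: "('s, 'e) ring_scheme \<Rightarrow> bool" where
  "local_ring A \<longleftrightarrow> cring A \<and> (\<exists>!I. maximalideal I A)"

definition is_topology_on :: "'u set \<Rightarrow> ('u set \<Rightarrow> bool) \<Rightarrow> bool" where
  "is_topology_on X Op \<longleftrightarrow> (\<forall>U. Op U \<longrightarrow> U \<subseteq> X) \<and> Op {} \<and> Op X \<and>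
     (\<forall>U V. Op U \<and> Op V \<longrightarrow> Op (U \<inter> V)) \<and> (\<forall>\<U>. (\<forall>U \<in> \<U>. Op U) \<longrightarrow> Op (\<Union>\<U>))"

definition sheaf_of_rings :: "'u set \<Rightarrow> ('u set \<Rightarrow> bool) \<Rightarrow> ('u set \<Rightarrow> ('s, 'e) ring_scheme)
    \<Rightarrow> ('u set \<Rightarrow> 'u set \<Rightarrow> 's \<Rightarrow> 's) \<Rightarrow> bool" where
  "sheaf_of_rings X Op F res \<longleftrightarrow>
     (\<forall>U. Op U \<longrightarrow> cring (F U)) \<and>
     (\<forall>U V. Op U \<and> Op V \<and> V \<subseteq> U \<longrightarrow> res U V \<in> ring_hom (F U) (F V)) \<and>
     (\<forall>U. Op U \<longrightarrow> (\<forall>s \<in> carrier (F U). res U U s = s)) \<and>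
     (\<forall>U V W. Op U \<and> Op V \<and> Op W \<and> W \<subseteq> V \<and> V \<subseteq> U \<longrightarrow>
        (\<forall>s \<in> carrier (F U). res V W (res U V s) = res U W s)) \<and>
     (\<forall>U \<U>. Op U \<and> (\<forall>V \<in> \<U>. Op V) \<and> \<Union>\<U> = U \<longrightarrow>
        (\<forall>s \<in> carrier (F U). \<forall>t \<in> carrier (F U). (\<forall>V \<in> \<U>. res U V s = res U V t) \<longrightarrow> s = t)) \<and>
     (\<forall>U \<U> f. Op U \<and> (\<forall>V \<in> \<U>. Op V) \<and> \<Union>\<U> = U \<and> (\<forall>V \<in> \<U>. f V \<in> carrier (F V)) \<and>
        (\<forall>V \<in> \<U>. \<forall>V' \<in> \<U>. res V (V \<inter> V') (f V) = res V' (V \<inter> V') (f V')) \<longrightarrow>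
        (\<exists>s \<in> carrier (F U). \<forall>V \<in> \<U>. res U V s = f V))"

definition locally_ringed_space :: "'u set \<Rightarrow> ('u set \<Rightarrow> bool) \<Rightarrow> ('u set \<Rightarrow> ('s, 'e) ring_scheme)
    \<Rightarrow> ('u set \<Rightarrow> 'u set \<Rightarrow> 's \<Rightarrow> 's) \<Rightarrow> bool" where
  "locally_ringed_space X Op F res \<longleftrightarrow> is_topology_on X Op \<and> sheaf_of_rings X Op F res \<and>
     (\<forall>x \<in> X. local_ring (stalk X Op F res x))"

definition AX_stalk :: "('a::comm_ring_1 \<Rightarrow> 'm::ab_group_add \<Rightarrow> 'm) \<Rightarrow> 'm set
    \<Rightarrow> ('m set set \<times> ('a set \<Rightarrow> ('a \<times> 'a) set)) set ring" where
  "AX_stalk sc P = stalk (Spec sc) (zopen sc) (sec_ring sc) (sec_res sc) P"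

end

theory Submission
  imports Defs
begin

text \<open>Evaluating a germ at \<open>p = (P : M)\<close> identifies the stalk \<open>\<A>\<^sub>X\<^sub>,\<^sub>P\<close> with \<open>R\<^sub>p\<close>. The map is
  injective because two sections with equal value at \<open>p\<close> have local fraction representations that are
  identified in \<open>R\<^sub>p\<close> by some \<open>u \<notin> p\<close>, hence agree on the neighbourhood \<open>D(u)\<close> of \<open>P\<close>; it is
  surjective because \<open>a/s\<close> is the value of the constant section \<open>a/s\<close> on \<open>D(s)\<close>. Since \<open>R\<^sub>p\<close> is local
  (its non-units form the ideal \<open>pR\<^sub>p\<close>) and ring isomorphisms transport local rings, all stalks are
  local. The sheaf axioms hold because open sets are unions of fibres of \<open>P \<mapsto> (P : M)\<close>, so
  sections are honest functions on the supports and glue pointwise.\<close>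

section \<open>Local rings\<close>

lemma local_ringI:
  assumes R: "cring R" and M: "ideal M R" "M \<noteq> carrier R"
    and proper_sub: "\<And>J. ideal J R \<Longrightarrow> J \<noteq> carrier R \<Longrightarrow> J \<subseteq> M"
  shows "local_ring R"
  unfolding local_ring_def
proof (intro conjI ex1I)
  show "cring R" by (rule R)
  show "maximalideal M R"
  proof (rule maximalidealI)
    fix J assume "ideal J R" "M \<subseteq> J" "J \<subseteq> carrier R"
    then show "J = M \<or> J = carrier R"
      using proper_sub by blast
  qed (use M in auto)
  fix I assume "maximalideal I R"
  then interpret I: maximalideal I R .
  have "I \<subseteq> M"
    using proper_sub[OF I.is_ideal] I.I_notcarr by blast
  then show "I = M"
    using I.I_maximal[OF M(1)] M(2) additive_subgroup.a_subset[OF ideal.axioms(1)[OF M(1)]] by blast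
qed

lemma ring_iso_inv_into:
  assumes h: "h \<in> ring_iso A B"
    and add_closed: "\<And>x y. x \<in> carrier A \<Longrightarrow> y \<in> carrier A \<Longrightarrow> x \<oplus>\<^bsub>A\<^esub> y \<in> carrier A"
    and mult_closed: "\<And>x y. x \<in> carrier A \<Longrightarrow> y \<in> carrier A \<Longrightarrow> x \<otimes>\<^bsub>A\<^esub> y \<in> carrier A"
    and one_closed: "\<one>\<^bsub>A\<^esub> \<in> carrier A"
  shows "inv_into (carrier A) h \<in> ring_iso B A"
proof -
  define g where "g = inv_into (carrier A) h"
  have bij: "bij_betw h (carrier A) (carrier B)"
    using ring_iso_memE(5)[OF h] .
  have g_bij: "bij_betw g (carrier B) (carrier A)"
    unfolding g_def by (rule bij_betw_inv_into[OF bij])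
  have g_h: "g (h a) = a" if "a \<in> carrier A" for a
    unfolding g_def using bij that by (simp add: bij_betw_inv_into_left)
  have h_g: "h (g b) = b" if "b \<in> carrier B" for b
    unfolding g_def using bij that by (simp add: bij_betw_inv_into_right)
  have g_closed: "g b \<in> carrier A" if "b \<in> carrier B" for b
    using bij_betwE[OF g_bij] that by blast
  show ?thesis
    unfolding g_def[symmetric]
  proof (rule ring_iso_memI)
    fix x y assume x: "x \<in> carrier B" and y: "y \<in> carrier B"
    show "g x \<in> carrier A"
      by (rule g_closed[OF x])
    have "x \<otimes>\<^bsub>B\<^esub> y = h (g x \<otimes>\<^bsub>A\<^esub> g y)"
      using ring_iso_memE(2)[OF h g_closed[OF x] g_closed[OF y]] h_g x y by simp
    then show "g (x \<otimes>\<^bsub>B\<^esub> y) = g x \<otimes>\<^bsub>A\<^esub> g y"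
      using g_h mult_closed g_closed x y by simp
    have "x \<oplus>\<^bsub>B\<^esub> y = h (g x \<oplus>\<^bsub>A\<^esub> g y)"
      using ring_iso_memE(3)[OF h g_closed[OF x] g_closed[OF y]] h_g x y by simp
    then show "g (x \<oplus>\<^bsub>B\<^esub> y) = g x \<oplus>\<^bsub>A\<^esub> g y"
      using g_h add_closed g_closed x y by simp
  next
    show "g \<one>\<^bsub>B\<^esub> = \<one>\<^bsub>A\<^esub>"
      using ring_iso_memE(4)[OF h] g_h[OF one_closed] by simp
  qed (rule g_bij)
qed

lemma cring_ring_iso:
  assumes B: "cring B" and h: "h \<in> ring_iso A B"
    and add_closed: "\<And>x y. x \<in> carrier A \<Longrightarrow> y \<in> carrier A \<Longrightarrow> x \<oplus>\<^bsub>A\<^esub> y \<in> carrier A"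
    and mult_closed: "\<And>x y. x \<in> carrier A \<Longrightarrow> y \<in> carrier A \<Longrightarrow> x \<otimes>\<^bsub>A\<^esub> y \<in> carrier A"
    and one_closed: "\<one>\<^bsub>A\<^esub> \<in> carrier A"
    and zero_closed: "\<zero>\<^bsub>A\<^esub> \<in> carrier A" and h_zero: "h \<zero>\<^bsub>A\<^esub> = \<zero>\<^bsub>B\<^esub>"
  shows "cring A"
proof -
  have g: "inv_into (carrier A) h \<in> ring_iso B A"
    using ring_iso_inv_into[OF h add_closed mult_closed one_closed] .
  have "inv_into (carrier A) h \<zero>\<^bsub>B\<^esub> = \<zero>\<^bsub>A\<^esub>"
    using h_zero zero_closed ring_iso_memE(5)[OF h] by (metis bij_betw_inv_into_left)
  then show ?thesis
    using cring.ring_iso_imp_img_cring[OF B g] by simp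
qed

lemma maximalideal_vimage_ring_iso:
  assumes A: "ring A" and B: "ring B" and h: "h \<in> ring_iso A B" and J: "maximalideal J B"
  shows "maximalideal {a \<in> carrier A. h a \<in> J} A"
proof -
  interpret h: ring_hom_ring A B h
    using ring_hom_ringI2[OF A B] h unfolding ring_iso_def by blast
  interpret J: maximalideal J B
    by (rule J)
  define g where "g = inv_into (carrier A) h"
  have g: "g \<in> ring_iso B A"
    unfolding g_def by (rule ring_iso_set_sym[OF A h])
  interpret g: ring_hom_ring B A g
    using ring_hom_ringI2[OF B A] g unfolding ring_iso_def by blast
  have bij: "bij_betw h (carrier A) (carrier B)"
    using ring_iso_memE(5)[OF h] .
  have g_h: "g (h a) = a" if "a \<in> carrier A" for a
    unfolding g_def using bij that by (simp add: bij_betw_inv_into_left)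
  have h_g: "h (g b) = b" if "b \<in> carrier B" for b
    unfolding g_def using bij that by (simp add: bij_betw_inv_into_right)
  show ?thesis
  proof (rule maximalidealI)
    show "ideal {a \<in> carrier A. h a \<in> J} A"
      by (rule h.ideal_vimage[OF J.is_ideal])
    show "carrier A \<noteq> {a \<in> carrier A. h a \<in> J}"
    proof
      assume "carrier A = {a \<in> carrier A. h a \<in> J}"
      then have "h \<one>\<^bsub>A\<^esub> \<in> J"
        using h.R.one_closed by blast
      then show False
        using J.one_imp_carrier J.I_notcarr by simp
    qed
    fix K assume K: "ideal K A" "{a \<in> carrier A. h a \<in> J} \<subseteq> K" "K \<subseteq> carrier A"
    define K' where "K' = {b \<in> carrier B. g b \<in> K}"
    have K_eq: "K = {a \<in> carrier A. h a \<in> K'}"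
      unfolding K'_def using K(3) g_h h.hom_closed by auto
    have "J \<subseteq> K'"
      unfolding K'_def using K(2) h_g g.hom_closed J.a_subset by auto
    then have "K' = J \<or> K' = carrier B"
      using J.I_maximal[OF g.ideal_vimage[OF K(1)]] unfolding K'_def by blast
    then show "K = {a \<in> carrier A. h a \<in> J} \<or> K = carrier A"
      using K_eq h.hom_closed by auto
  qed
qed

lemma local_ring_ring_iso:
  assumes A: "cring A" and h: "h \<in> ring_iso A B" and B: "local_ring B"
  shows "local_ring A"
proof -
  have rA: "ring A" and rB: "ring B"
    using A B cring.axioms(1) unfolding local_ring_def by blast+
  obtain J where J: "maximalideal J B" and J_unique: "\<And>J'. maximalideal J' B \<Longrightarrow> J' = J"
    using B unfolding local_ring_def by blast
  define g where "g = inv_into (carrier A) h"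
  have g: "g \<in> ring_iso B A"
    unfolding g_def by (rule ring_iso_set_sym[OF rA h])
  have g_h: "g (h a) = a" if "a \<in> carrier A" for a
    unfolding g_def using ring_iso_memE(5)[OF h] that by (simp add: bij_betw_inv_into_left)
  show ?thesis
    unfolding local_ring_def
  proof (intro conjI ex1I)
    show "maximalideal {a \<in> carrier A. h a \<in> J} A"
      by (rule maximalideal_vimage_ring_iso[OF rA rB h J])
    fix I assume I: "maximalideal I A"
    have "{b \<in> carrier B. g b \<in> I} = J"
      using J_unique maximalideal_vimage_ring_iso[OF rB rA g I] by blast
    moreover have "I \<subseteq> carrier A"
      using I additive_subgroup.a_subset ideal.axioms(1) maximalideal.axioms(1) by blast
    ultimately show "I = {a \<in> carrier A. h a \<in> J}"
      using g_h ring_iso_memE(1)[OF h] by auto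
  qed (rule A)
qed

section \<open>Localization at a prime ideal\<close>

locale prime_ideal =
  fixes p :: "'a::comm_ring_1 set"
  assumes one_not_mem: "1 \<notin> p"
    and zero_mem: "0 \<in> p"
    and add_mem: "a \<in> p \<Longrightarrow> b \<in> p \<Longrightarrow> a + b \<in> p"
    and mult_mem: "a \<in> p \<Longrightarrow> r * a \<in> p"
    and prime: "a * b \<in> p \<Longrightarrow> a \<in> p \<or> b \<in> p"
begin

lemma mult_mem_right: "a \<in> p \<Longrightarrow> a * r \<in> p"
  using mult_mem by (metis mult.commute)

lemma mult_not_mem: "s \<notin> p \<Longrightarrow> t \<notin> p \<Longrightarrow> s * t \<notin> p"
  using prime by blast

lemma loc_rel_refl: "s \<notin> p \<Longrightarrow> ((a, s), (a, s)) \<in> loc_rel p"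
  unfolding loc_rel_def using one_not_mem by force

lemma loc_rel_sym: "((a, s), (b, t)) \<in> loc_rel p \<Longrightarrow> ((b, t), (a, s)) \<in> loc_rel p"
  unfolding loc_rel_def by (force simp: algebra_simps)

lemma loc_rel_trans:
  assumes "((a, s), (b, t)) \<in> loc_rel p" and "((b, t), (c, w)) \<in> loc_rel p"
  shows "((a, s), (c, w)) \<in> loc_rel p"
proof -
  obtain u v where u: "u \<notin> p" "u * (a * t - b * s) = 0" and v: "v \<notin> p" "v * (b * w - c * t) = 0"
    and st: "s \<notin> p" "t \<notin> p" "w \<notin> p"
    using assms unfolding loc_rel_def by blast
  have "u * v * t * (a * w - c * s) = v * w * (u * (a * t - b * s)) + u * s * (v * (b * w - c * t))"
    by (simp add: algebra_simps)
  then have "u * v * t * (a * w - c * s) = 0"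
    using u v by simp
  moreover have "u * v * t \<notin> p"
    using u v st by (simp add: mult_not_mem)
  ultimately show ?thesis
    using st unfolding loc_rel_def by blast
qed

lemma mem_frac_iff: "(b, t) \<in> frac p a s \<longleftrightarrow> ((a, s), (b, t)) \<in> loc_rel p"
  unfolding frac_def by simp

lemma frac_eq_iff:
  assumes "s \<notin> p" and "t \<notin> p"
  shows "frac p a s = frac p b t \<longleftrightarrow> (\<exists>u. u \<notin> p \<and> u * (a * t - b * s) = 0)"
proof
  assume "frac p a s = frac p b t"
  moreover have "(b, t) \<in> frac p b t"
    using loc_rel_refl[OF assms(2)] mem_frac_iff by blast
  ultimately have "((a, s), (b, t)) \<in> loc_rel p"
    using mem_frac_iff by blast
  then show "\<exists>u. u \<notin> p \<and> u * (a * t - b * s) = 0"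
    unfolding loc_rel_def by blast
next
  assume "\<exists>u. u \<notin> p \<and> u * (a * t - b * s) = 0"
  then have r: "((a, s), (b, t)) \<in> loc_rel p"
    using assms unfolding loc_rel_def by blast
  show "frac p a s = frac p b t"
  proof (rule Set.set_eqI)
    fix x :: "'a \<times> 'a"
    obtain c w where "x = (c, w)"
      by fastforce
    then show "x \<in> frac p a s \<longleftrightarrow> x \<in> frac p b t"
      by (simp add: mem_frac_iff) (meson r loc_rel_sym loc_rel_trans)
  qed
qed

lemma frac_eqI: "s \<notin> p \<Longrightarrow> t \<notin> p \<Longrightarrow> a * t = b * s \<Longrightarrow> frac p a s = frac p b t"
  using frac_eq_iff one_not_mem by fastforce

lemma Union_frac_pairs:
  assumes "s \<notin> p" and "t \<notin> p"
    and "\<And>a' s' b' t'. ((a, s), (a', s')) \<in> loc_rel p \<Longrightarrow> ((b, t), (b', t')) \<in> loc_rel p \<Longrightarrow>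
           f a' s' b' t' = f a s b t"
  shows "\<Union>{f a' s' b' t' | a' s' b' t'. (a', s') \<in> frac p a s \<and> (b', t') \<in> frac p b t} = f a s b t"
proof -
  have "(a, s) \<in> frac p a s" "(b, t) \<in> frac p b t"
    using assms(1,2) loc_rel_refl mem_frac_iff by blast+
  then show ?thesis
    using assms(3) unfolding mem_frac_iff by blast
qed

lemma loc_add_frac:
  assumes "s \<notin> p" and "t \<notin> p"
  shows "loc_add p (frac p a s) (frac p b t) = frac p (a * t + b * s) (s * t)"
  unfolding loc_add_def
proof (rule Union_frac_pairs[OF assms])
  fix a' s' b' t'
  assume "((a, s), (a', s')) \<in> loc_rel p" and "((b, t), (b', t')) \<in> loc_rel p"
  then obtain u v where u: "u \<notin> p" "u * (a * s' - a' * s) = 0" and v: "v \<notin> p" "v * (b * t' - b' * t) = 0"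
    and st': "s' \<notin> p" "t' \<notin> p"
    unfolding loc_rel_def by blast
  have "u * v * ((a' * t' + b' * s') * (s * t) - (a * t + b * s) * (s' * t')) =
      - (v * t * t' * (u * (a * s' - a' * s)) + u * s * s' * (v * (b * t' - b' * t)))"
    by (simp add: algebra_simps)
  then have "u * v * ((a' * t' + b' * s') * (s * t) - (a * t + b * s) * (s' * t')) = 0"
    using u v by simp
  then show "frac p (a' * t' + b' * s') (s' * t') = frac p (a * t + b * s) (s * t)"
    using frac_eq_iff u v st' assms by (meson mult_not_mem)
qed

lemma loc_mult_frac:
  assumes "s \<notin> p" and "t \<notin> p"
  shows "loc_mult p (frac p a s) (frac p b t) = frac p (a * b) (s * t)"
  unfolding loc_mult_def
proof (rule Union_frac_pairs[OF assms])
  fix a' s' b' t'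
  assume "((a, s), (a', s')) \<in> loc_rel p" and "((b, t), (b', t')) \<in> loc_rel p"
  then obtain u v where u: "u \<notin> p" "u * (a * s' - a' * s) = 0" and v: "v \<notin> p" "v * (b * t' - b' * t) = 0"
    and st': "s' \<notin> p" "t' \<notin> p"
    unfolding loc_rel_def by blast
  have "u * v * ((a' * b') * (s * t) - (a * b) * (s' * t')) =
      - (v * b * t' * (u * (a * s' - a' * s)) + u * a' * s * (v * (b * t' - b' * t)))"
    by (simp add: algebra_simps)
  then have "u * v * ((a' * b') * (s * t) - (a * b) * (s' * t')) = 0"
    using u v by simp
  then show "frac p (a' * b') (s' * t') = frac p (a * b) (s * t)"
    using frac_eq_iff u v st' assms by (meson mult_not_mem)
qed

lemma frac_mem_loc_carrier: "s \<notin> p \<Longrightarrow> frac p a s \<in> loc_carrier p"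
  unfolding loc_carrier_def by blast

lemma loc_carrierE:
  assumes "x \<in> loc_carrier p"
  obtains a s where "s \<notin> p" and "x = frac p a s"
  using assms unfolding loc_carrier_def by blast

lemma loc_ring_simps:
  "carrier (loc_ring p) = loc_carrier p" "add (loc_ring p) = loc_add p" "mult (loc_ring p) = loc_mult p"
  "one (loc_ring p) = frac p 1 1" "zero (loc_ring p) = frac p 0 1"
  by (simp_all add: loc_ring_def)

lemma cring_loc_ring: "cring (loc_ring p)"
proof (rule cringI[OF abelian_groupI comm_monoidI], unfold loc_ring_simps)
  fix x assume "x \<in> loc_carrier p"
  then obtain a s where x: "s \<notin> p" "x = frac p a s"
    by (rule loc_carrierE)
  then have "loc_add p (frac p (- a) s) x = frac p 0 1"
    by (simp add: loc_add_frac mult_not_mem, intro frac_eqI) (simp_all add: mult_not_mem one_not_mem)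
  then show "\<exists>y\<in>loc_carrier p. loc_add p y x = frac p 0 1"
    using x(1) frac_mem_loc_carrier by blast
qed ((elim loc_carrierE)?; simp add: frac_mem_loc_carrier one_not_mem loc_add_frac loc_mult_frac mult_not_mem;
     rule frac_eqI; simp add: algebra_simps mult_not_mem)+

definition loc_max_ideal :: "('a \<times> 'a) set set" where
  "loc_max_ideal = {frac p a s | a s. a \<in> p \<and> s \<notin> p}"

lemma frac_mem_loc_max_ideal_iff:
  assumes "s \<notin> p"
  shows "frac p a s \<in> loc_max_ideal \<longleftrightarrow> a \<in> p"
proof
  assume "frac p a s \<in> loc_max_ideal"
  then obtain b t u where bt: "b \<in> p" "t \<notin> p" and u: "u \<notin> p" "u * (a * t - b * s) = 0"
    unfolding loc_max_ideal_def using frac_eq_iff[OF assms] by blast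
  then have "a * t - b * s \<in> p"
    using prime zero_mem by metis
  then have "(a * t - b * s) + b * s \<in> p"
    using add_mem mult_mem_right bt(1) by blast
  then have "a * t \<in> p"
    by simp
  then show "a \<in> p"
    using prime bt(2) by blast
qed (use assms in \<open>auto simp: loc_max_ideal_def\<close>)

lemma ideal_loc_max_ideal: "ideal loc_max_ideal (loc_ring p)"
proof -
  interpret R: cring "loc_ring p"
    by (rule cring_loc_ring)
  have sub: "loc_max_ideal \<subseteq> carrier (loc_ring p)"
    unfolding loc_max_ideal_def loc_ring_simps loc_carrier_def by blast
  have mult_closed: "x \<otimes>\<^bsub>loc_ring p\<^esub> y \<in> loc_max_ideal"
    if x: "x \<in> carrier (loc_ring p)" and y: "y \<in> loc_max_ideal" for x y
  proof -
    obtain c w where "w \<notin> p" "x = frac p c w"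
      using x loc_carrierE unfolding loc_ring_simps by blast
    moreover obtain a s where "a \<in> p" "s \<notin> p" "y = frac p a s"
      using y unfolding loc_max_ideal_def by blast
    ultimately show ?thesis
      unfolding loc_ring_simps by (simp add: loc_mult_frac mult_not_mem frac_mem_loc_max_ideal_iff mult_mem)
  qed
  have add_closed: "x \<oplus>\<^bsub>loc_ring p\<^esub> y \<in> loc_max_ideal"
    if x: "x \<in> loc_max_ideal" and y: "y \<in> loc_max_ideal" for x y
  proof -
    obtain c w where "c \<in> p" "w \<notin> p" "x = frac p c w"
      using x unfolding loc_max_ideal_def by blast
    moreover obtain a s where "a \<in> p" "s \<notin> p" "y = frac p a s"
      using y unfolding loc_max_ideal_def by blast
    ultimately show ?thesis
      unfolding loc_ring_simps
      by (simp add: loc_add_frac mult_not_mem frac_mem_loc_max_ideal_iff add_mem mult_mem_right)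
  qed
  have neg_closed: "\<ominus>\<^bsub>loc_ring p\<^esub> x \<in> loc_max_ideal" if x: "x \<in> loc_max_ideal" for x
  proof -
    have "\<ominus>\<^bsub>loc_ring p\<^esub> x = \<ominus>\<^bsub>loc_ring p\<^esub> \<one>\<^bsub>loc_ring p\<^esub> \<otimes>\<^bsub>loc_ring p\<^esub> x"
      using x sub R.l_minus R.l_one by auto
    then show ?thesis
      using mult_closed x by simp
  qed
  show ?thesis
  proof (rule idealI)
    show "subgroup loc_max_ideal (add_monoid (loc_ring p))"
    proof (rule R.add.subgroupI)
      show "loc_max_ideal \<noteq> {}"
        unfolding loc_max_ideal_def using zero_mem one_not_mem by blast
    qed (use sub add_closed neg_closed in \<open>auto simp: a_inv_def\<close>)
    fix a x assume a: "a \<in> loc_max_ideal" and x: "x \<in> carrier (loc_ring p)"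
    show "x \<otimes>\<^bsub>loc_ring p\<^esub> a \<in> loc_max_ideal"
      using mult_closed[OF x a] .
    then show "a \<otimes>\<^bsub>loc_ring p\<^esub> x \<in> loc_max_ideal"
      using R.m_comm[OF _ x] a sub by auto
  qed (rule R.ring_axioms)
qed

lemma local_ring_loc_ring: "local_ring (loc_ring p)"
proof (rule local_ringI[OF cring_loc_ring ideal_loc_max_ideal])
  show "loc_max_ideal \<noteq> carrier (loc_ring p)"
    using frac_mem_loc_max_ideal_iff[of 1 1] one_not_mem frac_mem_loc_carrier
    unfolding loc_ring_simps by blast
  fix J assume J_ideal: "ideal J (loc_ring p)" and J_proper: "J \<noteq> carrier (loc_ring p)"
  interpret J: ideal J "loc_ring p" by (rule J_ideal)
  show "J \<subseteq> loc_max_ideal"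
  proof
    fix x assume "x \<in> J"
    obtain a s where x: "s \<notin> p" "x = frac p a s"
      using \<open>x \<in> J\<close> J.a_subset loc_carrierE unfolding loc_ring_simps by blast
    show "x \<in> loc_max_ideal"
    proof (rule ccontr)
      assume "x \<notin> loc_max_ideal"
      then have a: "a \<notin> p"
        using x frac_mem_loc_max_ideal_iff by blast
      have "frac p s a \<otimes>\<^bsub>loc_ring p\<^esub> x = \<one>\<^bsub>loc_ring p\<^esub>"
        unfolding x loc_ring_simps using a x(1)
        by (simp add: loc_mult_frac, intro frac_eqI) (simp_all add: mult_not_mem one_not_mem mult.commute)
      then have "\<one>\<^bsub>loc_ring p\<^esub> \<in> J"
        using J.I_l_closed[OF \<open>x \<in> J\<close>, of "frac p s a"] frac_mem_loc_carrier[OF a]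
        unfolding loc_ring_simps by simp
      then show False
        using J.one_imp_carrier J_proper by blast
    qed
  qed
qed

lemmas loc_ring_laws =
  cring.cring_simprules[OF cring_loc_ring, unfolded loc_ring_simps]
  monoid.r_one[OF ring.is_monoid[OF cring.axioms(1)[OF cring_loc_ring]], unfolded loc_ring_simps]

lemma loc_add_neg_frac:
  assumes "x \<in> loc_carrier p"
  shows "loc_add p (loc_mult p (frac p (- 1) 1) x) x = frac p 0 1"
  using assms
  by (elim loc_carrierE) (simp add: loc_mult_frac loc_add_frac one_not_mem mult_not_mem, rule frac_eqI,
      simp_all add: one_not_mem mult_not_mem)

end

section \<open>The Zariski topology on \<open>Spec M\<close>\<close>

lemma colon_mono: "L \<subseteq> N \<Longrightarrow> colon sc L \<subseteq> colon sc N"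
  unfolding colon_def by blast

lemma colon_Int: "colon sc (L \<inter> N) = colon sc L \<inter> colon sc N"
  unfolding colon_def by blast

definition basic_open :: "('a::comm_ring_1 \<Rightarrow> 'm::ab_group_add \<Rightarrow> 'm) \<Rightarrow> 'a \<Rightarrow> 'm set set" where
  "basic_open sc f = {P \<in> Spec sc. f \<notin> colon sc P}"

context module
begin

lemma prime_ideal_colon:
  assumes "P \<in> Spec scale"
  shows "prime_ideal (colon scale P)"
proof
  have P: "subspace P" "P \<noteq> UNIV" and prime: "\<And>r m. scale r m \<in> P \<Longrightarrow> r \<in> colon scale P \<or> m \<in> P"
    using assms unfolding Spec_def prime_submodule_def by auto
  show "1 \<notin> colon scale P"
    using P(2) unfolding colon_def by auto
  show "0 \<in> colon scale P"
    using subspace_0[OF P(1)] unfolding colon_def by simp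
  fix a b r
  show "a \<in> colon scale P \<Longrightarrow> b \<in> colon scale P \<Longrightarrow> a + b \<in> colon scale P"
    by (simp add: colon_def scale_left_distrib subspace_add[OF P(1)])
  show "a \<in> colon scale P \<Longrightarrow> r * a \<in> colon scale P"
    by (simp add: colon_def subspace_scale[OF P(1)] flip: scale_scale)
  show "a \<in> colon scale P \<or> b \<in> colon scale P" if ab: "a * b \<in> colon scale P"
  proof (rule disjCI)
    assume "b \<notin> colon scale P"
    then obtain m where "scale b m \<notin> P"
      unfolding colon_def by blast
    moreover have "scale a (scale b m) \<in> P"
      using ab unfolding colon_def scale_scale by blast
    ultimately show "a \<in> colon scale P"
      using prime by blast
  qed
qed

lemma zopen_subset_Spec: "zopen scale U \<Longrightarrow> U \<subseteq> Spec scale"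
  unfolding zopen_def by blast

lemma zopen_saturated:
  assumes "zopen scale U" and "P \<in> U" and "P' \<in> Spec scale" and "colon scale P' = colon scale P"
  shows "P' \<in> U"
  using assms unfolding zopen_def VV_def by auto

lemma zopen_Int:
  assumes "zopen scale U" and "zopen scale V"
  shows "zopen scale (U \<inter> V)"
proof -
  obtain L N where L: "subspace L" "U = Spec scale - VV scale L" and N: "subspace N" "V = Spec scale - VV scale N"
    using assms unfolding zopen_def by blast
  have "U \<inter> V = Spec scale - VV scale (L \<inter> N)"
  proof (intro equalityI subsetI)
    fix P assume P: "P \<in> U \<inter> V"
    then obtain a b where ab: "a \<in> colon scale L" "a \<notin> colon scale P" "b \<in> colon scale N" "b \<notin> colon scale P"
      using L N unfolding VV_def by blast
    have "a * b \<in> colon scale L"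
      using ab(1) by (simp add: colon_def flip: scale_scale)
    moreover have "a * b \<in> colon scale N"
      using ab(3) by (simp add: colon_def mult.commute[of a b] flip: scale_scale)
    moreover have "a * b \<notin> colon scale P"
      using ab prime_ideal.prime[OF prime_ideal_colon] P L by blast
    ultimately show "P \<in> Spec scale - VV scale (L \<inter> N)"
      using P L unfolding VV_def colon_Int by blast
  next
    fix P assume "P \<in> Spec scale - VV scale (L \<inter> N)"
    then show "P \<in> U \<inter> V"
      using L N unfolding VV_def colon_Int by blast
  qed
  then show ?thesis
    unfolding zopen_def using subspace_inter[OF L(1) N(1)] by blast
qed

lemma zopen_Spec: "zopen scale (Spec scale)"
proof -
  have "1 \<in> colon scale UNIV"
    by (simp add: colon_def)
  then have "VV scale UNIV = {}"
    using prime_ideal.one_not_mem[OF prime_ideal_colon] unfolding VV_def by blast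
  then show ?thesis
    unfolding zopen_def using subspace_UNIV by (intro exI[of _ UNIV]) simp
qed

lemma zopen_empty: "zopen scale {}"
proof -
  have "colon scale {0} \<subseteq> colon scale P" if "P \<in> Spec scale" for P
    using that by (intro colon_mono) (simp add: Spec_def prime_submodule_def subspace_0)
  then have "VV scale {0} = Spec scale"
    unfolding VV_def by blast
  then show ?thesis
    unfolding zopen_def using subspace_single_0 by (intro exI[of _ "{0}"]) simp
qed

lemma colon_span_subset_iff:
  assumes "subspace P"
  shows "colon scale (span {scale r m | r m. \<exists>i\<in>I. r \<in> colon scale (L i)}) \<subseteq> colon scale P \<longleftrightarrow>
    (\<forall>i\<in>I. colon scale (L i) \<subseteq> colon scale P)"
    (is "colon scale (span ?G) \<subseteq> _ \<longleftrightarrow> _")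
proof
  assume "colon scale (span ?G) \<subseteq> colon scale P"
  moreover have "colon scale (L i) \<subseteq> colon scale (span ?G)" if "i \<in> I" for i
  proof
    fix r assume "r \<in> colon scale (L i)"
    then have "scale r m \<in> span ?G" for m
      using that by (intro span_base) blast
    then show "r \<in> colon scale (span ?G)"
      unfolding colon_def by blast
  qed
  ultimately show "\<forall>i\<in>I. colon scale (L i) \<subseteq> colon scale P"
    by blast
next
  assume sub: "\<forall>i\<in>I. colon scale (L i) \<subseteq> colon scale P"
  have "?G \<subseteq> P"
  proof
    fix x assume "x \<in> ?G"
    then obtain r m i where "x = scale r m" "i \<in> I" "r \<in> colon scale (L i)"
      by blast
    then show "x \<in> P"
      using sub unfolding colon_def by blast
  qed
  then show "colon scale (span ?G) \<subseteq> colon scale P"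
    using assms by (intro colon_mono span_minimal)
qed

lemma zopen_Union:
  assumes "\<forall>U\<in>\<U>. zopen scale U"
  shows "zopen scale (\<Union>\<U>)"
proof -
  have "\<forall>U\<in>\<U>. \<exists>L. subspace L \<and> U = Spec scale - VV scale L"
    using assms unfolding zopen_def by blast
  from bchoice[OF this] obtain L where L: "\<forall>U\<in>\<U>. subspace (L U) \<and> U = Spec scale - VV scale (L U)"
    by blast
  define N where "N = span {scale r m | r m. \<exists>U\<in>\<U>. r \<in> colon scale (L U)}"
  have colon_N: "colon scale N \<subseteq> colon scale P \<longleftrightarrow> (\<forall>U\<in>\<U>. colon scale (L U) \<subseteq> colon scale P)"
    if "P \<in> Spec scale" for P
    unfolding N_def using that by (intro colon_span_subset_iff) (simp add: Spec_def prime_submodule_def)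
  have "\<Union>\<U> = Spec scale - VV scale N"
  proof (intro equalityI subsetI)
    fix P assume "P \<in> \<Union>\<U>"
    then obtain U where "U \<in> \<U>" "P \<in> U"
      by blast
    then have "P \<in> Spec scale" "\<not> colon scale (L U) \<subseteq> colon scale P"
      using L unfolding VV_def by auto
    then show "P \<in> Spec scale - VV scale N"
      using colon_N \<open>U \<in> \<U>\<close> unfolding VV_def by blast
  next
    fix P assume P: "P \<in> Spec scale - VV scale N"
    then obtain U where "U \<in> \<U>" "\<not> colon scale (L U) \<subseteq> colon scale P"
      using colon_N unfolding VV_def by blast
    then have "P \<in> U"
      using L P unfolding VV_def by auto
    then show "P \<in> \<Union>\<U>"
      using \<open>U \<in> \<U>\<close> by blast
  qed
  then show ?thesis
    unfolding zopen_def N_def using subspace_span by blast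
qed

lemma is_topology_on_Spec: "is_topology_on (Spec scale) (zopen scale)"
  unfolding is_topology_on_def
  using zopen_subset_Spec zopen_empty zopen_Spec zopen_Int zopen_Union by blast

lemma zopen_basic_open: "zopen scale (basic_open scale f)"
proof -
  have "subspace (range (scale f))"
    unfolding subspace_def
  proof (intro conjI ballI allI)
    show "0 \<in> range (scale f)"
      using scale_zero_right[of f] by (metis rangeI)
    fix x y c assume "x \<in> range (scale f)" "y \<in> range (scale f)"
    then obtain u v where "x = scale f u" "y = scale f v"
      by blast
    then show "x + y \<in> range (scale f)" and "scale c x \<in> range (scale f)"
      using scale_right_distrib[of f u v] scale_left_commute[of c f u] by (metis rangeI)+
  qed
  moreover have "basic_open scale f = Spec scale - VV scale (range (scale f))"
  proof -
    have "f \<in> colon scale (range (scale f))"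
      by (simp add: colon_def)
    moreover have "range (scale f) \<subseteq> P \<longleftrightarrow> f \<in> colon scale P" for P
      unfolding colon_def by blast
    ultimately show ?thesis
      unfolding basic_open_def VV_def using colon_mono by blast
  qed
  ultimately show ?thesis
    unfolding zopen_def by blast
qed

end

section \<open>The sheaf of rings \<open>\<A>\<^sub>X\<close>\<close>

definition pointwise :: "('a::comm_ring_1 \<Rightarrow> 'm::ab_group_add \<Rightarrow> 'm)
    \<Rightarrow> ('a set \<Rightarrow> ('a \<times> 'a) set \<Rightarrow> ('a \<times> 'a) set \<Rightarrow> ('a \<times> 'a) set) \<Rightarrow> 'm set set
    \<Rightarrow> ('a set \<Rightarrow> ('a \<times> 'a) set) \<Rightarrow> ('a set \<Rightarrow> ('a \<times> 'a) set) \<Rightarrow> 'a set \<Rightarrow> ('a \<times> 'a) set" where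
  "pointwise sc f U \<gamma> \<delta> = (\<lambda>q. if q \<in> Supp sc U then f q (\<gamma> q) (\<delta> q) else {})"

definition const_section :: "('a::comm_ring_1 \<Rightarrow> 'm::ab_group_add \<Rightarrow> 'm) \<Rightarrow> 'm set set
    \<Rightarrow> 'a \<Rightarrow> 'a \<Rightarrow> 'a set \<Rightarrow> ('a \<times> 'a) set" where
  "const_section sc U a s = (\<lambda>q. if q \<in> Supp sc U then frac q a s else {})"

definition glue :: "('a::comm_ring_1 \<Rightarrow> 'm::ab_group_add \<Rightarrow> 'm) \<Rightarrow> 'm set set \<Rightarrow> 'm set set set
    \<Rightarrow> ('m set set \<Rightarrow> 'a set \<Rightarrow> ('a \<times> 'a) set) \<Rightarrow> 'a set \<Rightarrow> ('a \<times> 'a) set" where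
  "glue sc U \<U> f = (\<lambda>q. if q \<in> Supp sc U then f (SOME V. V \<in> \<U> \<and> q \<in> Supp sc V) q else {})"

lemma sec_ring_simps:
  "carrier (sec_ring sc U) = sections sc U"
  "add (sec_ring sc U) = pointwise sc loc_add U"
  "mult (sec_ring sc U) = pointwise sc loc_mult U"
  "one (sec_ring sc U) = const_section sc U 1 1"
  "zero (sec_ring sc U) = const_section sc U 0 1"
  by (simp_all add: sec_ring_def pointwise_def const_section_def fun_eq_iff)

lemma pointwise_apply: "pointwise sc f U \<gamma> \<delta> q = (if q \<in> Supp sc U then f q (\<gamma> q) (\<delta> q) else {})"
  unfolding pointwise_def by simp

lemma const_section_apply: "const_section sc U a s q = (if q \<in> Supp sc U then frac q a s else {})"
  unfolding const_section_def by simp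

lemma colon_mem_Supp: "P \<in> U \<Longrightarrow> colon sc P \<in> Supp sc U"
  unfolding Supp_def by blast

lemma Supp_mono: "V \<subseteq> U \<Longrightarrow> Supp sc V \<subseteq> Supp sc U"
  unfolding Supp_def by blast

lemma sec_res_apply: "sec_res sc U V \<gamma> q = (if q \<in> Supp sc V then \<gamma> q else {})"
  unfolding sec_res_def by simp

lemma sec_res_eq_iff: "sec_res sc U W \<gamma> = sec_res sc V W \<delta> \<longleftrightarrow> (\<forall>q\<in>Supp sc W. \<gamma> q = \<delta> q)"
  unfolding sec_res_def fun_eq_iff by auto

lemma sec_res_comp: "W \<subseteq> V \<Longrightarrow> sec_res sc V W (sec_res sc U V \<gamma>) = sec_res sc U W \<gamma>"
  using Supp_mono[of W V sc] by (auto simp: fun_eq_iff sec_res_apply)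

lemma sectionsI:
  assumes "\<And>q. q \<notin> Supp sc U \<Longrightarrow> \<gamma> q = {}"
    and "\<And>q. q \<in> Supp sc U \<Longrightarrow> \<gamma> q \<in> loc_carrier q"
    and "\<And>Q. Q \<in> U \<Longrightarrow> \<exists>W a s. zopen sc W \<and> Q \<in> W \<and> W \<subseteq> U \<and>
           (\<forall>P\<in>W. s \<notin> colon sc P \<and> \<gamma> (colon sc P) = frac (colon sc P) a s)"
  shows "\<gamma> \<in> sections sc U"
  unfolding sections_def mem_Collect_eq
proof (intro conjI allI impI ballI)
  fix Q assume "Q \<in> U"
  then obtain W a s where "zopen sc W \<and> Q \<in> W \<and> W \<subseteq> U \<and>
      (\<forall>P\<in>W. s \<notin> colon sc P \<and> \<gamma> (colon sc P) = frac (colon sc P) a s)"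
    using assms(3) by blast
  then show "\<exists>W. zopen sc W \<and> Q \<in> W \<and> W \<subseteq> U \<and>
      (\<exists>a s. \<forall>P\<in>W. s \<notin> colon sc P \<and> \<gamma> (colon sc P) = frac (colon sc P) a s)"
    by blast
qed (use assms(1,2) in auto)

lemma sections_outside: "\<gamma> \<in> sections sc U \<Longrightarrow> q \<notin> Supp sc U \<Longrightarrow> \<gamma> q = {}"
  by (simp add: sections_def)

lemma sections_value: "\<gamma> \<in> sections sc U \<Longrightarrow> q \<in> Supp sc U \<Longrightarrow> \<gamma> q \<in> loc_carrier q"
  by (simp add: sections_def)

lemma sec_res_id: "\<gamma> \<in> sections sc U \<Longrightarrow> sec_res sc U U \<gamma> = \<gamma>"
  by (simp add: fun_eq_iff sec_res_apply sections_outside)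

lemma sections_locally_frac:
  assumes "\<gamma> \<in> sections sc U" and "Q \<in> U"
  obtains W a s where "zopen sc W" "Q \<in> W" "W \<subseteq> U"
    and "\<And>P. P \<in> W \<Longrightarrow> s \<notin> colon sc P \<and> \<gamma> (colon sc P) = frac (colon sc P) a s"
proof -
  have "\<exists>W. zopen sc W \<and> Q \<in> W \<and> W \<subseteq> U \<and>
      (\<exists>a s. \<forall>P\<in>W. s \<notin> colon sc P \<and> \<gamma> (colon sc P) = frac (colon sc P) a s)"
    using assms by (simp add: sections_def)
  then show thesis
    using that by blast
qed

context module
begin

lemma prime_ideal_Supp: "zopen scale U \<Longrightarrow> q \<in> Supp scale U \<Longrightarrow> prime_ideal q"
  unfolding Supp_def using prime_ideal_colon zopen_subset_Spec by blast

lemma Supp_Int: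
  assumes "zopen scale U" and "zopen scale V"
  shows "Supp scale (U \<inter> V) = Supp scale U \<inter> Supp scale V"
proof
  show "Supp scale U \<inter> Supp scale V \<subseteq> Supp scale (U \<inter> V)"
  proof
    fix q assume "q \<in> Supp scale U \<inter> Supp scale V"
    then obtain P P' where "P \<in> U" "P' \<in> V" "q = colon scale P" "q = colon scale P'"
      unfolding Supp_def by blast
    then have "P \<in> U \<inter> V"
      using zopen_saturated[OF assms(2)] zopen_subset_Spec[OF assms(1)] by blast
    then show "q \<in> Supp scale (U \<inter> V)"
      using \<open>q = colon scale P\<close> colon_mem_Supp by blast
  qed
qed (simp add: Supp_mono)

lemma const_section_mem_sections:
  assumes U: "zopen scale U" and s: "\<And>P. P \<in> U \<Longrightarrow> s \<notin> colon scale P"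
  shows "const_section scale U a s \<in> sections scale U"
proof (rule sectionsI)
  fix q assume q: "q \<in> Supp scale U"
  then obtain P where "P \<in> U" "q = colon scale P"
    unfolding Supp_def by blast
  then show "const_section scale U a s q \<in> loc_carrier q"
    using q s prime_ideal.frac_mem_loc_carrier[OF prime_ideal_Supp[OF U q]] by (simp add: const_section_def)
next
  fix Q assume "Q \<in> U"
  have "\<forall>P\<in>U. s \<notin> colon scale P \<and> const_section scale U a s (colon scale P) = frac (colon scale P) a s"
    using s by (auto simp: const_section_def colon_mem_Supp)
  then show "\<exists>W b t. zopen scale W \<and> Q \<in> W \<and> W \<subseteq> U \<and>
      (\<forall>P\<in>W. t \<notin> colon scale P \<and> const_section scale U a s (colon scale P) = frac (colon scale P) b t)"
    using U \<open>Q \<in> U\<close> by blast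
qed (simp add: const_section_def)

lemma pointwise_mem_sections:
  assumes U: "zopen scale U" and \<gamma>: "\<gamma> \<in> sections scale U" and \<delta>: "\<delta> \<in> sections scale U"
    and f: "\<And>q a s b t. prime_ideal q \<Longrightarrow> s \<notin> q \<Longrightarrow> t \<notin> q \<Longrightarrow>
              f q (frac q a s) (frac q b t) = frac q (n a s b t) (s * t)"
  shows "pointwise scale f U \<gamma> \<delta> \<in> sections scale U"
proof (rule sectionsI)
  fix q assume q: "q \<in> Supp scale U"
  interpret q: prime_ideal q
    by (rule prime_ideal_Supp[OF U q])
  obtain a s where a: "s \<notin> q" "\<gamma> q = frac q a s"
    using sections_value[OF \<gamma> q] by (rule q.loc_carrierE)
  obtain b t where b: "t \<notin> q" "\<delta> q = frac q b t"
    using sections_value[OF \<delta> q] by (rule q.loc_carrierE)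
  show "pointwise scale f U \<gamma> \<delta> q \<in> loc_carrier q"
    using q a b by (simp add: pointwise_def f q.prime_ideal_axioms q.mult_not_mem q.frac_mem_loc_carrier)
next
  fix Q assume "Q \<in> U"
  obtain W1 a s where W1: "zopen scale W1" "Q \<in> W1" "W1 \<subseteq> U"
    and \<gamma>_W1: "\<And>P. P \<in> W1 \<Longrightarrow> s \<notin> colon scale P \<and> \<gamma> (colon scale P) = frac (colon scale P) a s"
    using sections_locally_frac[OF \<gamma> \<open>Q \<in> U\<close>] by metis
  obtain W2 b t where W2: "zopen scale W2" "Q \<in> W2" "W2 \<subseteq> U"
    and \<delta>_W2: "\<And>P. P \<in> W2 \<Longrightarrow> t \<notin> colon scale P \<and> \<delta> (colon scale P) = frac (colon scale P) b t"
    using sections_locally_frac[OF \<delta> \<open>Q \<in> U\<close>] by metis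
  have "s * t \<notin> colon scale P \<and>
      pointwise scale f U \<gamma> \<delta> (colon scale P) = frac (colon scale P) (n a s b t) (s * t)"
    if "P \<in> W1 \<inter> W2" for P
  proof -
    have P: "P \<in> W1" "P \<in> W2" "colon scale P \<in> Supp scale U"
      using that W1(3) colon_mem_Supp by blast+
    have q: "prime_ideal (colon scale P)"
      using prime_ideal_Supp[OF U P(3)] .
    show ?thesis
      using \<gamma>_W1[OF P(1)] \<delta>_W2[OF P(2)] P(3)
      by (simp add: pointwise_def f[OF q] prime_ideal.mult_not_mem[OF q])
  qed
  then have on_W: "\<forall>P\<in>W1 \<inter> W2. s * t \<notin> colon scale P \<and>
      pointwise scale f U \<gamma> \<delta> (colon scale P) = frac (colon scale P) (n a s b t) (s * t)"
    by blast
  moreover have "zopen scale (W1 \<inter> W2)" "Q \<in> W1 \<inter> W2" "W1 \<inter> W2 \<subseteq> U"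
    using W1 W2 zopen_Int[OF W1(1) W2(1)] by auto
  ultimately show "\<exists>W a s. zopen scale W \<and> Q \<in> W \<and> W \<subseteq> U \<and>
      (\<forall>P\<in>W. s \<notin> colon scale P \<and> pointwise scale f U \<gamma> \<delta> (colon scale P) = frac (colon scale P) a s)"
    by blast
qed (simp add: pointwise_def)

lemma loc_add_mem_sections:
  "zopen scale U \<Longrightarrow> \<gamma> \<in> sections scale U \<Longrightarrow> \<delta> \<in> sections scale U \<Longrightarrow>
    pointwise scale loc_add U \<gamma> \<delta> \<in> sections scale U"
  by (rule pointwise_mem_sections) (simp_all add: prime_ideal.loc_add_frac)

lemma loc_mult_mem_sections:
  "zopen scale U \<Longrightarrow> \<gamma> \<in> sections scale U \<Longrightarrow> \<delta> \<in> sections scale U \<Longrightarrow>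
    pointwise scale loc_mult U \<gamma> \<delta> \<in> sections scale U"
  by (rule pointwise_mem_sections) (simp_all add: prime_ideal.loc_mult_frac)

lemma cring_sec_ring:
  assumes U: "zopen scale U"
  shows "cring (sec_ring scale U)"
proof -
  have at_Supp: "prime_ideal q" "x q \<in> loc_carrier q"
    if "q \<in> Supp scale U" "x \<in> sections scale U" for q x
    using that prime_ideal_Supp[OF U] sections_value by blast+
  have one: "const_section scale U c 1 \<in> sections scale U" for c
    using U by (rule const_section_mem_sections)
      (use U prime_ideal.one_not_mem prime_ideal_colon zopen_subset_Spec in blast)
  show ?thesis
  proof (rule cringI[OF abelian_groupI comm_monoidI], unfold sec_ring_simps)
    fix x assume x: "x \<in> sections scale U"
    show "\<exists>y\<in>sections scale U. pointwise scale loc_add U y x = const_section scale U 0 1"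
    proof
      show "pointwise scale loc_mult U (const_section scale U (- 1) 1) x \<in> sections scale U"
        by (rule loc_mult_mem_sections[OF U one x])
      show "pointwise scale loc_add U (pointwise scale loc_mult U (const_section scale U (- 1) 1) x) x =
          const_section scale U 0 1"
        using at_Supp[OF _ x] by (simp add: fun_eq_iff pointwise_def const_section_def prime_ideal.loc_add_neg_frac)
    qed
  qed (simp_all add: U one loc_add_mem_sections loc_mult_mem_sections fun_eq_iff pointwise_apply
      const_section_apply prime_ideal.loc_ring_laws at_Supp sections_outside)
qed

lemma sec_res_mem_sections:
  assumes V: "zopen scale V" and "V \<subseteq> U" and \<gamma>: "\<gamma> \<in> sections scale U"
  shows "sec_res scale U V \<gamma> \<in> sections scale V"
proof (rule sectionsI)
  show "sec_res scale U V \<gamma> q \<in> loc_carrier q" if "q \<in> Supp scale V" for q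
    using that sections_value[OF \<gamma>] Supp_mono[OF \<open>V \<subseteq> U\<close>] by (auto simp: sec_res_apply)
next
  fix Q assume "Q \<in> V"
  then obtain W a s where W: "zopen scale W" "Q \<in> W" "W \<subseteq> U"
    and \<gamma>_W: "\<And>P. P \<in> W \<Longrightarrow> s \<notin> colon scale P \<and> \<gamma> (colon scale P) = frac (colon scale P) a s"
    using sections_locally_frac[OF \<gamma>] \<open>V \<subseteq> U\<close> by (metis subsetD)
  then have "\<forall>P\<in>W \<inter> V. s \<notin> colon scale P \<and> sec_res scale U V \<gamma> (colon scale P) = frac (colon scale P) a s"
    by (simp add: sec_res_apply colon_mem_Supp)
  moreover have "zopen scale (W \<inter> V)" "Q \<in> W \<inter> V"
    using zopen_Int[OF W(1) V] W(2) \<open>Q \<in> V\<close> by auto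
  ultimately show "\<exists>W a s. zopen scale W \<and> Q \<in> W \<and> W \<subseteq> V \<and>
      (\<forall>P\<in>W. s \<notin> colon scale P \<and> sec_res scale U V \<gamma> (colon scale P) = frac (colon scale P) a s)"
    by blast
qed (simp add: sec_res_apply)

lemma ring_hom_sec_res:
  assumes "zopen scale V" and "V \<subseteq> U"
  shows "sec_res scale U V \<in> ring_hom (sec_ring scale U) (sec_ring scale V)"
proof (rule ring_hom_memI, unfold sec_ring_simps)
  show "sec_res scale U V \<gamma> \<in> sections scale V" if "\<gamma> \<in> sections scale U" for \<gamma>
    using sec_res_mem_sections[OF assms that] .
qed (use Supp_mono[OF \<open>V \<subseteq> U\<close>] in \<open>auto simp: fun_eq_iff sec_res_apply pointwise_apply const_section_apply\<close>)

lemma sections_eq_if_restrictions_eq: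
  assumes "\<Union>\<U> = U" and \<gamma>: "\<gamma> \<in> sections scale U" and \<delta>: "\<delta> \<in> sections scale U"
    and eq: "\<forall>V\<in>\<U>. sec_res scale U V \<gamma> = sec_res scale U V \<delta>"
  shows "\<gamma> = \<delta>"
proof
  fix q show "\<gamma> q = \<delta> q"
  proof (cases "q \<in> Supp scale U")
    case True
    then obtain P V where "V \<in> \<U>" "P \<in> V" "q = colon scale P"
      using assms(1) unfolding Supp_def by blast
    then show ?thesis
      using eq colon_mem_Supp unfolding sec_res_eq_iff by blast
  qed (simp add: sections_outside[OF \<gamma>] sections_outside[OF \<delta>])
qed

text \<open>Supports of open sets intersect like the open sets themselves, so compatible families agree
  wherever both are defined.\<close>
lemma compatible_sections_agree:
  assumes "zopen scale V" "zopen scale V'" and "sec_res scale V (V \<inter> V') \<gamma> = sec_res scale V' (V \<inter> V') \<delta>"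
    and "q \<in> Supp scale V" "q \<in> Supp scale V'"
  shows "\<gamma> q = \<delta> q"
  using assms Supp_Int[OF assms(1,2)] unfolding sec_res_eq_iff by blast

lemma glue_eq:
  assumes "\<Union>\<U> = U" and opens: "\<forall>V\<in>\<U>. zopen scale V"
    and compatible: "\<forall>V\<in>\<U>. \<forall>V'\<in>\<U>. sec_res scale V (V \<inter> V') (f V) = sec_res scale V' (V \<inter> V') (f V')"
    and V: "V \<in> \<U>" and q: "q \<in> Supp scale V"
  shows "glue scale U \<U> f q = f V q"
proof -
  let ?V' = "SOME V. V \<in> \<U> \<and> q \<in> Supp scale V"
  have "q \<in> Supp scale U"
    using Supp_mono[of V U] V q assms(1) by blast
  moreover have V': "?V' \<in> \<U> \<and> q \<in> Supp scale ?V'"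
    using V q by (rule someI[where x = V, OF conjI])
  moreover have "f ?V' q = f V q"
    using compatible_sections_agree[of ?V' V "f ?V'" "f V" q] opens compatible V' V q by blast
  ultimately show ?thesis
    unfolding glue_def by simp
qed

lemma sections_glue:
  assumes U: "\<Union>\<U> = U" and opens: "\<forall>V\<in>\<U>. zopen scale V"
    and f: "\<forall>V\<in>\<U>. f V \<in> sections scale V"
    and compatible: "\<forall>V\<in>\<U>. \<forall>V'\<in>\<U>. sec_res scale V (V \<inter> V') (f V) = sec_res scale V' (V \<inter> V') (f V')"
  shows "\<exists>\<gamma>\<in>sections scale U. \<forall>V\<in>\<U>. sec_res scale U V \<gamma> = f V"
proof (intro bexI ballI)
  note glue_eq = glue_eq[OF U opens compatible]
  show "glue scale U \<U> f \<in> sections scale U"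
  proof (rule sectionsI)
    fix q assume "q \<in> Supp scale U"
    then obtain P V where V: "V \<in> \<U>" "P \<in> V" and q: "q = colon scale P"
      using U unfolding Supp_def by blast
    then have "q \<in> Supp scale V"
      using colon_mem_Supp by blast
    moreover have "f V \<in> sections scale V"
      using f V(1) by blast
    ultimately show "glue scale U \<U> f q \<in> loc_carrier q"
      using glue_eq[OF V(1)] sections_value by metis
  next
    fix Q assume "Q \<in> U"
    then obtain V where V: "V \<in> \<U>" "Q \<in> V"
      using U by blast
    then have "f V \<in> sections scale V"
      using f by blast
    then obtain W a s where W: "zopen scale W" "Q \<in> W" "W \<subseteq> V"
      and f_W: "\<And>P. P \<in> W \<Longrightarrow> s \<notin> colon scale P \<and> f V (colon scale P) = frac (colon scale P) a s"
      using sections_locally_frac[OF _ V(2)] by metis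
    have "glue scale U \<U> f (colon scale P) = f V (colon scale P)" if "P \<in> W" for P
      using glue_eq[OF V(1)] colon_mem_Supp that W(3) by blast
    then have "\<forall>P\<in>W. s \<notin> colon scale P \<and> glue scale U \<U> f (colon scale P) = frac (colon scale P) a s"
      using f_W by simp
    moreover have "W \<subseteq> U"
      using W(3) V(1) U by blast
    ultimately show "\<exists>W a s. zopen scale W \<and> Q \<in> W \<and> W \<subseteq> U \<and>
        (\<forall>P\<in>W. s \<notin> colon scale P \<and> glue scale U \<U> f (colon scale P) = frac (colon scale P) a s)"
      using W(1,2) by blast
  qed (simp add: glue_def)
  fix V assume V: "V \<in> \<U>"
  then have "f V \<in> sections scale V"
    using f by blast
  then show "sec_res scale U V (glue scale U \<U> f) = f V"
    using glue_eq[OF V] sections_outside[OF \<open>f V \<in> sections scale V\<close>] by (simp add: fun_eq_iff sec_res_apply)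
qed

lemma sheaf_of_rings_sec_ring: "sheaf_of_rings (Spec scale) (zopen scale) (sec_ring scale) (sec_res scale)"
  unfolding sheaf_of_rings_def sec_ring_simps(1)
proof (intro conjI allI impI ballI)
  show "cring (sec_ring scale U)" if "zopen scale U" for U
    using cring_sec_ring[OF that] .
  show "sec_res scale U V \<in> ring_hom (sec_ring scale U) (sec_ring scale V)"
    if "zopen scale U \<and> zopen scale V \<and> V \<subseteq> U" for U V
    using ring_hom_sec_res that by blast
  show "sec_res scale U U \<gamma> = \<gamma>" if "\<gamma> \<in> sections scale U" for U \<gamma>
    using sec_res_id[OF that] .
  show "sec_res scale V W (sec_res scale U V \<gamma>) = sec_res scale U W \<gamma>"
    if "zopen scale U \<and> zopen scale V \<and> zopen scale W \<and> W \<subseteq> V \<and> V \<subseteq> U" for U V W \<gamma>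
    using sec_res_comp that by blast
  show "\<gamma> = \<delta>" if "zopen scale U \<and> (\<forall>V\<in>\<U>. zopen scale V) \<and> \<Union>\<U> = U"
    and "\<gamma> \<in> sections scale U" "\<delta> \<in> sections scale U"
    and "\<forall>V\<in>\<U>. sec_res scale U V \<gamma> = sec_res scale U V \<delta>" for U \<U> \<gamma> \<delta>
    using sections_eq_if_restrictions_eq that by blast
  show "\<exists>\<gamma>\<in>sections scale U. \<forall>V\<in>\<U>. sec_res scale U V \<gamma> = f V"
    if "zopen scale U \<and> (\<forall>V\<in>\<U>. zopen scale V) \<and> \<Union>\<U> = U \<and> (\<forall>V\<in>\<U>. f V \<in> sections scale V) \<and>
        (\<forall>V\<in>\<U>. \<forall>V'\<in>\<U>. sec_res scale V (V \<inter> V') (f V) = sec_res scale V' (V \<inter> V') (f V'))" for U \<U> f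
    using sections_glue that by blast
qed

end

section \<open>Stalks of a presheaf of rings\<close>

lemma Union_eq_const: "S \<noteq> {} \<Longrightarrow> (\<And>x. x \<in> S \<Longrightarrow> x = c) \<Longrightarrow> \<Union>S = c"
  by blast

locale presheaf_of_rings =
  fixes X :: "'u set" and Op :: "'u set \<Rightarrow> bool"
    and F :: "'u set \<Rightarrow> ('s, 'e) ring_scheme" and res :: "'u set \<Rightarrow> 'u set \<Rightarrow> 's \<Rightarrow> 's"
  assumes Op_space: "Op X"
    and Op_Int: "Op U \<Longrightarrow> Op V \<Longrightarrow> Op (U \<inter> V)"
    and ring_F: "Op U \<Longrightarrow> ring (F U)"
    and res_hom: "Op U \<Longrightarrow> Op V \<Longrightarrow> V \<subseteq> U \<Longrightarrow> res U V \<in> ring_hom (F U) (F V)"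
    and res_comp: "Op U \<Longrightarrow> Op V \<Longrightarrow> Op W \<Longrightarrow> W \<subseteq> V \<Longrightarrow> V \<subseteq> U \<Longrightarrow> s \<in> carrier (F U) \<Longrightarrow>
      res V W (res U V s) = res U W s"

lemma presheaf_of_rings_if_sheaf:
  assumes "is_topology_on X Op" and "sheaf_of_rings X Op F res"
  shows "presheaf_of_rings X Op F res"
proof -
  have top: "Op X" "\<And>U V. Op U \<Longrightarrow> Op V \<Longrightarrow> Op (U \<inter> V)"
    using assms(1) by (simp_all add: is_topology_on_def)
  have sheaf: "\<And>U. Op U \<Longrightarrow> cring (F U)"
    "\<And>U V. Op U \<Longrightarrow> Op V \<Longrightarrow> V \<subseteq> U \<Longrightarrow> res U V \<in> ring_hom (F U) (F V)"
    "\<And>U V W s. Op U \<Longrightarrow> Op V \<Longrightarrow> Op W \<Longrightarrow> W \<subseteq> V \<Longrightarrow> V \<subseteq> U \<Longrightarrow> s \<in> carrier (F U) \<Longrightarrow>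
      res V W (res U V s) = res U W s"
    using assms(2) by (simp_all add: sheaf_of_rings_def)
  show ?thesis
    by (rule presheaf_of_rings.intro) (auto intro: top sheaf cring.axioms(1))
qed

context presheaf_of_rings
begin

lemma res_closed: "Op U \<Longrightarrow> Op V \<Longrightarrow> V \<subseteq> U \<Longrightarrow> s \<in> carrier (F U) \<Longrightarrow> res U V s \<in> carrier (F V)"
  by (rule ring_hom_closed[OF res_hom])

lemma germ_rel_iff:
  "((U, s), (V, t)) \<in> germ_rel Op F res x \<longleftrightarrow>
    Op U \<and> x \<in> U \<and> s \<in> carrier (F U) \<and> Op V \<and> x \<in> V \<and> t \<in> carrier (F V) \<and>
    (\<exists>W. Op W \<and> x \<in> W \<and> W \<subseteq> U \<inter> V \<and> res U W s = res V W t)"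
  unfolding germ_rel_def by simp

lemma res_eq_shrink:
  assumes "Op U" "Op V" "Op W" "Op W'" "W' \<subseteq> W" "W \<subseteq> U \<inter> V" "s \<in> carrier (F U)" "t \<in> carrier (F V)"
    and "res U W s = res V W t"
  shows "res U W' s = res V W' t"
proof -
  have "W \<subseteq> U" "W \<subseteq> V"
    using assms(6) by auto
  have "res U W' s = res W W' (res U W s)"
    using res_comp[OF assms(1,3,4,5) \<open>W \<subseteq> U\<close> assms(7)] by simp
  also have "\<dots> = res W W' (res V W t)"
    using assms(9) by simp
  also have "\<dots> = res V W' t"
    using res_comp[OF assms(2,3,4,5) \<open>W \<subseteq> V\<close> assms(8)] .
  finally show ?thesis .
qed

lemma germ_rel_refl: "Op U \<Longrightarrow> x \<in> U \<Longrightarrow> s \<in> carrier (F U) \<Longrightarrow> ((U, s), (U, s)) \<in> germ_rel Op F res x"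
  unfolding germ_rel_iff by (intro conjI exI[of _ U]) auto

lemma germ_rel_sym:
  assumes "((U, s), (V, t)) \<in> germ_rel Op F res x"
  shows "((V, t), (U, s)) \<in> germ_rel Op F res x"
proof -
  obtain W where W: "Op W" "x \<in> W" "W \<subseteq> U \<inter> V" "res U W s = res V W t"
    using assms unfolding germ_rel_iff by blast
  then have "W \<subseteq> V \<inter> U" "res V W t = res U W s"
    by auto
  then show ?thesis
    using assms W(1,2) unfolding germ_rel_iff by blast
qed

lemma germ_rel_trans:
  assumes "((U, s), (V, t)) \<in> germ_rel Op F res x" and "((V, t), (V', t')) \<in> germ_rel Op F res x"
  shows "((U, s), (V', t')) \<in> germ_rel Op F res x"
proof -
  obtain W1 W2 where W1: "Op W1" "x \<in> W1" "W1 \<subseteq> U \<inter> V" "res U W1 s = res V W1 t"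
    and W2: "Op W2" "x \<in> W2" "W2 \<subseteq> V \<inter> V'" "res V W2 t = res V' W2 t'"
    using assms unfolding germ_rel_iff by blast
  have facts: "Op U" "Op V" "Op V'" "s \<in> carrier (F U)" "t \<in> carrier (F V)" "t' \<in> carrier (F V')"
    "x \<in> U" "x \<in> V'"
    using assms unfolding germ_rel_iff by blast+
  have W: "Op (W1 \<inter> W2)" "x \<in> W1 \<inter> W2" "W1 \<inter> W2 \<subseteq> U \<inter> V'"
    using Op_Int W1 W2 by blast+
  have "res U (W1 \<inter> W2) s = res V (W1 \<inter> W2) t"
    using res_eq_shrink[of U V W1 "W1 \<inter> W2" s t] W1 W(1) facts by blast
  also have "\<dots> = res V' (W1 \<inter> W2) t'"
    using res_eq_shrink[of V V' W2 "W1 \<inter> W2" t t'] W2 W(1) facts by blast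
  finally show ?thesis
    unfolding germ_rel_iff using facts W by blast
qed

lemma mem_germ_iff: "(V, t) \<in> germ Op F res x U s \<longleftrightarrow> ((U, s), (V, t)) \<in> germ_rel Op F res x"
  unfolding germ_def by simp

lemma germ_eq_iff:
  assumes "Op U" "x \<in> U" "s \<in> carrier (F U)" "Op V" "x \<in> V" "t \<in> carrier (F V)"
  shows "germ Op F res x U s = germ Op F res x V t \<longleftrightarrow> ((U, s), (V, t)) \<in> germ_rel Op F res x"
proof
  assume "germ Op F res x U s = germ Op F res x V t"
  then show "((U, s), (V, t)) \<in> germ_rel Op F res x"
    using germ_rel_refl[OF assms(4-6)] mem_germ_iff by metis
next
  assume r: "((U, s), (V, t)) \<in> germ_rel Op F res x"
  show "germ Op F res x U s = germ Op F res x V t"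
  proof (rule Set.set_eqI)
    fix y :: "'u set \<times> 's"
    obtain W w where "y = (W, w)"
      by fastforce
    then show "y \<in> germ Op F res x U s \<longleftrightarrow> y \<in> germ Op F res x V t"
      by (simp add: mem_germ_iff) (meson r germ_rel_sym germ_rel_trans)
  qed
qed

lemma stalk_carrier:
  "carrier (stalk X Op F res x) = {germ Op F res x U s | U s. Op U \<and> x \<in> U \<and> s \<in> carrier (F U)}"
  by (simp add: stalk_def)

lemma germ_self: "Op U \<Longrightarrow> x \<in> U \<Longrightarrow> s \<in> carrier (F U) \<Longrightarrow> (U, s) \<in> germ Op F res x U s"
  by (simp add: mem_germ_iff germ_rel_refl)

lemma res_Int_op:
  assumes opr_res: "\<And>U V a b. Op U \<Longrightarrow> Op V \<Longrightarrow> V \<subseteq> U \<Longrightarrow> a \<in> carrier (F U) \<Longrightarrow> b \<in> carrier (F U) \<Longrightarrow>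
      res U V (opr (F U) a b) = opr (F V) (res U V a) (res U V b)"
    and U: "Op U" "s \<in> carrier (F U)" and V: "Op V" "t \<in> carrier (F V)" and W: "Op W" "W \<subseteq> U \<inter> V"
  shows "res (U \<inter> V) W (opr (F (U \<inter> V)) (res U (U \<inter> V) s) (res V (U \<inter> V) t)) =
    opr (F W) (res U W s) (res V W t)"
proof -
  have UV: "Op (U \<inter> V)"
    using Op_Int U V by blast
  have "res (U \<inter> V) W (opr (F (U \<inter> V)) (res U (U \<inter> V) s) (res V (U \<inter> V) t)) =
      opr (F W) (res (U \<inter> V) W (res U (U \<inter> V) s)) (res (U \<inter> V) W (res V (U \<inter> V) t))"
    using opr_res[OF UV] res_closed UV U V W by blast
  also have "\<dots> = opr (F W) (res U W s) (res V W t)"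
    using res_comp[OF U(1) UV W _ U(2)] res_comp[OF V(1) UV W _ V(2)] by simp
  finally show ?thesis .
qed

text \<open>Well-definedness of the stalk operations, for \<open>opr\<close> addition or multiplication.\<close>
lemma Union_germ_op:
  assumes opr_closed: "\<And>U a b. Op U \<Longrightarrow> a \<in> carrier (F U) \<Longrightarrow> b \<in> carrier (F U) \<Longrightarrow>
      opr (F U) a b \<in> carrier (F U)"
    and opr_res: "\<And>U V a b. Op U \<Longrightarrow> Op V \<Longrightarrow> V \<subseteq> U \<Longrightarrow> a \<in> carrier (F U) \<Longrightarrow> b \<in> carrier (F U) \<Longrightarrow>
      res U V (opr (F U) a b) = opr (F V) (res U V a) (res U V b)"
    and U: "Op U" "x \<in> U" "s \<in> carrier (F U)" and V: "Op V" "x \<in> V" "t \<in> carrier (F V)"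
  shows "\<Union>{germ Op F res x (U' \<inter> V') (opr (F (U' \<inter> V')) (res U' (U' \<inter> V') s') (res V' (U' \<inter> V') t'))
            | U' s' V' t'. (U', s') \<in> germ Op F res x U s \<and> (V', t') \<in> germ Op F res x V t}
       = germ Op F res x (U \<inter> V) (opr (F (U \<inter> V)) (res U (U \<inter> V) s) (res V (U \<inter> V) t))"
    (is "\<Union>?S = germ Op F res x (U \<inter> V) (?op U s V t)")
proof -
  have op_closed: "?op U s V t \<in> carrier (F (U \<inter> V))"
    if "Op U" "s \<in> carrier (F U)" "Op V" "t \<in> carrier (F V)" for U s V t
    using opr_closed[OF Op_Int[OF that(1,3)] res_closed[OF that(1) Op_Int[OF that(1,3)] _ that(2)]
        res_closed[OF that(3) Op_Int[OF that(1,3)] _ that(4)]] by simp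
  show ?thesis
  proof (rule Union_eq_const)
    show "?S \<noteq> {}"
      using germ_self U V by blast
    fix g assume "g \<in> ?S"
    then obtain U' s' V' t' where g: "g = germ Op F res x (U' \<inter> V') (?op U' s' V' t')"
      and rU: "((U, s), (U', s')) \<in> germ_rel Op F res x" and rV: "((V, t), (V', t')) \<in> germ_rel Op F res x"
      unfolding mem_germ_iff by blast
    obtain W1 W2 where W1: "Op W1" "x \<in> W1" "W1 \<subseteq> U \<inter> U'" "res U W1 s = res U' W1 s'"
      and W2: "Op W2" "x \<in> W2" "W2 \<subseteq> V \<inter> V'" "res V W2 t = res V' W2 t'"
      and U': "Op U'" "x \<in> U'" "s' \<in> carrier (F U')" and V': "Op V'" "x \<in> V'" "t' \<in> carrier (F V')"
      using rU rV unfolding germ_rel_iff by blast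
    define W where "W = W1 \<inter> W2"
    have W: "Op W" "x \<in> W" "W \<subseteq> (U' \<inter> V') \<inter> (U \<inter> V)"
      unfolding W_def using Op_Int W1 W2 by blast+
    have "res U W s = res U' W s'" "res V W t = res V' W t'"
      using res_eq_shrink[OF U(1) U'(1) W1(1) W(1) _ W1(3) U(3) U'(3) W1(4)]
        res_eq_shrink[OF V(1) V'(1) W2(1) W(1) _ W2(3) V(3) V'(3) W2(4)]
      unfolding W_def by auto
    then have "res (U' \<inter> V') W (?op U' s' V' t') = res (U \<inter> V) W (?op U s V t)"
      using res_Int_op[where opr = opr, OF opr_res] U V U' V' W by auto
    moreover have "Op (U' \<inter> V')" "Op (U \<inter> V)"
      using Op_Int U V U' V' by blast+
    moreover have "?op U' s' V' t' \<in> carrier (F (U' \<inter> V'))" "?op U s V t \<in> carrier (F (U \<inter> V))"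
      using op_closed U V U' V' by blast+
    ultimately show "g = germ Op F res x (U \<inter> V) (?op U s V t)"
      unfolding g using germ_eq_iff germ_rel_iff W U V U' V' by auto
  qed
qed

lemma stalk_add_germ:
  assumes "Op U" "x \<in> U" "s \<in> carrier (F U)" "Op V" "x \<in> V" "t \<in> carrier (F V)"
  shows "germ Op F res x U s \<oplus>\<^bsub>stalk X Op F res x\<^esub> germ Op F res x V t =
    germ Op F res x (U \<inter> V) (res U (U \<inter> V) s \<oplus>\<^bsub>F (U \<inter> V)\<^esub> res V (U \<inter> V) t)"
  using Union_germ_op[where opr = add, OF ring.ring_simprules(1)[OF ring_F] ring_hom_add[OF res_hom] assms]
  by (simp add: stalk_def)

lemma stalk_mult_germ:
  assumes "Op U" "x \<in> U" "s \<in> carrier (F U)" "Op V" "x \<in> V" "t \<in> carrier (F V)"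
  shows "germ Op F res x U s \<otimes>\<^bsub>stalk X Op F res x\<^esub> germ Op F res x V t =
    germ Op F res x (U \<inter> V) (res U (U \<inter> V) s \<otimes>\<^bsub>F (U \<inter> V)\<^esub> res V (U \<inter> V) t)"
  using Union_germ_op[where opr = mult, OF ring.ring_simprules(5)[OF ring_F] ring_hom_mult[OF res_hom] assms]
  by (simp add: stalk_def)

lemma germ_mem_stalk_carrier:
  "Op U \<Longrightarrow> x \<in> U \<Longrightarrow> s \<in> carrier (F U) \<Longrightarrow> germ Op F res x U s \<in> carrier (stalk X Op F res x)"
  unfolding stalk_carrier by blast

lemma stalk_carrierE:
  assumes "a \<in> carrier (stalk X Op F res x)"
  obtains U s where "Op U" "x \<in> U" "s \<in> carrier (F U)" "a = germ Op F res x U s"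
  using assms unfolding stalk_carrier by blast

lemma res_Int_closed:
  assumes "Op U" "s \<in> carrier (F U)" "Op V"
  shows "res U (U \<inter> V) s \<in> carrier (F (U \<inter> V))" "res U (V \<inter> U) s \<in> carrier (F (V \<inter> U))"
  using res_closed[OF assms(1) Op_Int[OF assms(1,3)] _ assms(2)] res_closed[OF assms(1) Op_Int[OF assms(3,1)] _ assms(2)]
  by auto

lemma stalk_add_closed:
  assumes "a \<in> carrier (stalk X Op F res x)" and "b \<in> carrier (stalk X Op F res x)"
  shows "a \<oplus>\<^bsub>stalk X Op F res x\<^esub> b \<in> carrier (stalk X Op F res x)"
  using assms
proof (elim stalk_carrierE)
  fix U s V t assume "Op U" "x \<in> U" "s \<in> carrier (F U)" "Op V" "x \<in> V" "t \<in> carrier (F V)"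
    and "a = germ Op F res x U s" "b = germ Op F res x V t"
  then show ?thesis
    by (simp add: stalk_add_germ germ_mem_stalk_carrier Op_Int res_Int_closed ring.ring_simprules(1)[OF ring_F])
qed

lemma stalk_mult_closed:
  assumes "a \<in> carrier (stalk X Op F res x)" and "b \<in> carrier (stalk X Op F res x)"
  shows "a \<otimes>\<^bsub>stalk X Op F res x\<^esub> b \<in> carrier (stalk X Op F res x)"
  using assms
proof (elim stalk_carrierE)
  fix U s V t assume "Op U" "x \<in> U" "s \<in> carrier (F U)" "Op V" "x \<in> V" "t \<in> carrier (F V)"
    and "a = germ Op F res x U s" "b = germ Op F res x V t"
  then show ?thesis
    by (simp add: stalk_mult_germ germ_mem_stalk_carrier Op_Int res_Int_closed ring.ring_simprules(5)[OF ring_F])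
qed

lemma stalk_one: "\<one>\<^bsub>stalk X Op F res x\<^esub> = germ Op F res x X \<one>\<^bsub>F X\<^esub>"
  and stalk_zero: "\<zero>\<^bsub>stalk X Op F res x\<^esub> = germ Op F res x X \<zero>\<^bsub>F X\<^esub>"
  by (simp_all add: stalk_def)

end

section \<open>The stalks of \<open>\<A>\<^sub>X\<close>\<close>

text \<open>All representatives \<open>(U, \<gamma>)\<close> of a germ at \<open>P\<close> have the same value at \<open>(P : M)\<close>; the union picks it out.\<close>
definition germ_eval :: "('a::comm_ring_1 \<Rightarrow> 'm::ab_group_add \<Rightarrow> 'm) \<Rightarrow> 'm set
    \<Rightarrow> ('m set set \<times> ('a set \<Rightarrow> ('a \<times> 'a) set)) set \<Rightarrow> ('a \<times> 'a) set" where
  "germ_eval sc P g = \<Union>{\<gamma> (colon sc P) | U \<gamma>. (U, \<gamma>) \<in> g}"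

context module
begin

lemma presheaf_of_rings_sec_ring: "presheaf_of_rings (Spec scale) (zopen scale) (sec_ring scale) (sec_res scale)"
  by (rule presheaf_of_rings_if_sheaf[OF is_topology_on_Spec sheaf_of_rings_sec_ring])

lemma germ_rel_sec_iff:
  "((U, \<gamma>), (V, \<delta>)) \<in> germ_rel (zopen scale) (sec_ring scale) (sec_res scale) P \<longleftrightarrow>
    zopen scale U \<and> P \<in> U \<and> \<gamma> \<in> sections scale U \<and> zopen scale V \<and> P \<in> V \<and> \<delta> \<in> sections scale V \<and>
    (\<exists>W. zopen scale W \<and> P \<in> W \<and> W \<subseteq> U \<inter> V \<and> (\<forall>q\<in>Supp scale W. \<gamma> q = \<delta> q))"
  unfolding germ_rel_def sec_ring_simps sec_res_eq_iff by simp

lemma germ_eval_germ: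
  assumes "zopen scale U" "P \<in> U" "\<gamma> \<in> sections scale U"
  shows "germ_eval scale P (germ (zopen scale) (sec_ring scale) (sec_res scale) P U \<gamma>) = \<gamma> (colon scale P)"
  unfolding germ_eval_def
proof (rule Union_eq_const)
  interpret presheaf_of_rings "Spec scale" "zopen scale" "sec_ring scale" "sec_res scale"
    by (rule presheaf_of_rings_sec_ring)
  show "{\<delta> (colon scale P) |V \<delta>. (V, \<delta>) \<in> germ (zopen scale) (sec_ring scale) (sec_res scale) P U \<gamma>} \<noteq> {}"
    using germ_self assms by (fastforce simp: sec_ring_simps)
  fix y assume "y \<in> {\<delta> (colon scale P) |V \<delta>. (V, \<delta>) \<in> germ (zopen scale) (sec_ring scale) (sec_res scale) P U \<gamma>}"
  then obtain V \<delta> W where "y = \<delta> (colon scale P)" "P \<in> W" "\<forall>q\<in>Supp scale W. \<gamma> q = \<delta> q"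
    unfolding mem_germ_iff germ_rel_sec_iff by blast
  then show "y = \<gamma> (colon scale P)"
    using colon_mem_Supp by metis
qed

lemma germ_eq_if_eval_eq:
  assumes U: "zopen scale U" "P \<in> U" "\<gamma> \<in> sections scale U"
    and V: "zopen scale V" "P \<in> V" "\<delta> \<in> sections scale V"
    and eq: "\<gamma> (colon scale P) = \<delta> (colon scale P)"
  shows "germ (zopen scale) (sec_ring scale) (sec_res scale) P U \<gamma> =
    germ (zopen scale) (sec_ring scale) (sec_res scale) P V \<delta>"
proof -
  interpret presheaf_of_rings "Spec scale" "zopen scale" "sec_ring scale" "sec_res scale"
    by (rule presheaf_of_rings_sec_ring)
  obtain W1 a s where W1: "zopen scale W1" "P \<in> W1" "W1 \<subseteq> U"
    and \<gamma>_W1: "\<And>P'. P' \<in> W1 \<Longrightarrow> s \<notin> colon scale P' \<and> \<gamma> (colon scale P') = frac (colon scale P') a s"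
    using sections_locally_frac[OF U(3,2)] by metis
  obtain W2 b t where W2: "zopen scale W2" "P \<in> W2" "W2 \<subseteq> V"
    and \<delta>_W2: "\<And>P'. P' \<in> W2 \<Longrightarrow> t \<notin> colon scale P' \<and> \<delta> (colon scale P') = frac (colon scale P') b t"
    using sections_locally_frac[OF V(3,2)] by metis
  have P: "prime_ideal (colon scale P)"
    using prime_ideal_colon zopen_subset_Spec U(1,2) by blast
  obtain u where u: "u \<notin> colon scale P" "u * (a * t - b * s) = 0"
    using eq \<gamma>_W1[OF W1(2)] \<delta>_W2[OF W2(2)] prime_ideal.frac_eq_iff[OF P] by metis
  define W where "W = W1 \<inter> W2 \<inter> basic_open scale u"
  have "P \<in> Spec scale"
    using U(1,2) zopen_subset_Spec by blast
  then have W: "zopen scale W" "P \<in> W" "W \<subseteq> U \<inter> V"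
    unfolding W_def using W1 W2 u(1) zopen_Int zopen_basic_open by (auto simp: basic_open_def)
  have "\<gamma> q = \<delta> q" if q: "q \<in> Supp scale W" for q
  proof -
    obtain P' where P': "P' \<in> W" "q = colon scale P'"
      using q unfolding Supp_def by blast
    then have "prime_ideal q" "u \<notin> q"
      using prime_ideal_colon unfolding W_def basic_open_def by auto
    moreover have "s \<notin> q" "\<gamma> q = frac q a s" "t \<notin> q" "\<delta> q = frac q b t"
      using \<gamma>_W1 \<delta>_W2 P' unfolding W_def by auto
    ultimately show ?thesis
      using prime_ideal.frac_eq_iff u(2) by metis
  qed
  then show ?thesis
    using germ_eq_iff germ_rel_sec_iff U V W by (simp add: sec_ring_simps) blast
qed

lemma AX_stalk_carrierE:
  assumes "a \<in> carrier (AX_stalk scale P)"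
  obtains U \<gamma> where "zopen scale U" "P \<in> U" "\<gamma> \<in> sections scale U"
    and "a = germ (zopen scale) (sec_ring scale) (sec_res scale) P U \<gamma>"
  using assms unfolding AX_stalk_def presheaf_of_rings.stalk_carrier[OF presheaf_of_rings_sec_ring] sec_ring_simps
  by blast

lemma germ_eval_mem_loc_carrier:
  assumes "a \<in> carrier (AX_stalk scale P)"
  shows "germ_eval scale P a \<in> loc_carrier (colon scale P)"
  using assms
proof (rule AX_stalk_carrierE)
  fix U \<gamma> assume U: "zopen scale U" "P \<in> U" "\<gamma> \<in> sections scale U"
    and "a = germ (zopen scale) (sec_ring scale) (sec_res scale) P U \<gamma>"
  then show ?thesis
    using germ_eval_germ[OF U] sections_value[OF U(3) colon_mem_Supp[OF U(2)]] by simp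
qed

lemma germ_eval_add_mult:
  assumes P: "P \<in> Spec scale" and a: "a \<in> carrier (AX_stalk scale P)" and b: "b \<in> carrier (AX_stalk scale P)"
  shows "germ_eval scale P (a \<oplus>\<^bsub>AX_stalk scale P\<^esub> b) =
      loc_add (colon scale P) (germ_eval scale P a) (germ_eval scale P b)"
    and "germ_eval scale P (a \<otimes>\<^bsub>AX_stalk scale P\<^esub> b) =
      loc_mult (colon scale P) (germ_eval scale P a) (germ_eval scale P b)"
proof -
  interpret presheaf_of_rings "Spec scale" "zopen scale" "sec_ring scale" "sec_res scale"
    by (rule presheaf_of_rings_sec_ring)
  obtain U \<gamma> where U: "zopen scale U" "P \<in> U" "\<gamma> \<in> sections scale U"
    and a_eq: "a = germ (zopen scale) (sec_ring scale) (sec_res scale) P U \<gamma>"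
    using a by (rule AX_stalk_carrierE)
  obtain V \<delta> where V: "zopen scale V" "P \<in> V" "\<delta> \<in> sections scale V"
    and b_eq: "b = germ (zopen scale) (sec_ring scale) (sec_res scale) P V \<delta>"
    using b by (rule AX_stalk_carrierE)
  have UV: "zopen scale (U \<inter> V)" "P \<in> U \<inter> V"
    using U V Op_Int by auto
  have p_Supp: "colon scale P \<in> Supp scale (U \<inter> V)"
    by (rule colon_mem_Supp[OF UV(2)])
  have \<gamma>\<delta>: "\<gamma> \<in> carrier (sec_ring scale U)" "\<delta> \<in> carrier (sec_ring scale V)"
    using U V by (simp_all add: sec_ring_simps)
  have res: "sec_res scale U (U \<inter> V) \<gamma> \<in> carrier (sec_ring scale (U \<inter> V))"
    "sec_res scale V (U \<inter> V) \<delta> \<in> carrier (sec_ring scale (U \<inter> V))"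
    using res_Int_closed U V \<gamma>\<delta> by auto
  have "sec_res scale U (U \<inter> V) \<gamma> \<oplus>\<^bsub>sec_ring scale (U \<inter> V)\<^esub> sec_res scale V (U \<inter> V) \<delta>
      \<in> sections scale (U \<inter> V)"
    using ring.ring_simprules(1)[OF ring_F[OF UV(1)] res] by (simp add: sec_ring_simps)
  then show "germ_eval scale P (a \<oplus>\<^bsub>AX_stalk scale P\<^esub> b) =
      loc_add (colon scale P) (germ_eval scale P a) (germ_eval scale P b)"
    unfolding a_eq b_eq AX_stalk_def stalk_add_germ[OF U(1,2) \<gamma>\<delta>(1) V(1,2) \<gamma>\<delta>(2)] using U V UV p_Supp
    by (simp add: germ_eval_germ sec_ring_simps pointwise_apply sec_res_apply)
  have "sec_res scale U (U \<inter> V) \<gamma> \<otimes>\<^bsub>sec_ring scale (U \<inter> V)\<^esub> sec_res scale V (U \<inter> V) \<delta>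
      \<in> sections scale (U \<inter> V)"
    using ring.ring_simprules(5)[OF ring_F[OF UV(1)] res] by (simp add: sec_ring_simps)
  then show "germ_eval scale P (a \<otimes>\<^bsub>AX_stalk scale P\<^esub> b) =
      loc_mult (colon scale P) (germ_eval scale P a) (germ_eval scale P b)"
    unfolding a_eq b_eq AX_stalk_def stalk_mult_germ[OF U(1,2) \<gamma>\<delta>(1) V(1,2) \<gamma>\<delta>(2)] using U V UV p_Supp
    by (simp add: germ_eval_germ sec_ring_simps pointwise_apply sec_res_apply)
qed

lemma germ_eval_one_zero:
  assumes P: "P \<in> Spec scale"
  shows "germ_eval scale P \<one>\<^bsub>AX_stalk scale P\<^esub> = frac (colon scale P) 1 1"
    and "germ_eval scale P \<zero>\<^bsub>AX_stalk scale P\<^esub> = frac (colon scale P) 0 1"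
proof -
  interpret presheaf_of_rings "Spec scale" "zopen scale" "sec_ring scale" "sec_res scale"
    by (rule presheaf_of_rings_sec_ring)
  have "\<one>\<^bsub>sec_ring scale (Spec scale)\<^esub> \<in> sections scale (Spec scale)"
    "\<zero>\<^bsub>sec_ring scale (Spec scale)\<^esub> \<in> sections scale (Spec scale)"
    using ring.ring_simprules(2,6)[OF ring_F[OF Op_space]] by (simp_all add: sec_ring_simps)
  then show "germ_eval scale P \<one>\<^bsub>AX_stalk scale P\<^esub> = frac (colon scale P) 1 1"
    and "germ_eval scale P \<zero>\<^bsub>AX_stalk scale P\<^esub> = frac (colon scale P) 0 1"
    unfolding AX_stalk_def stalk_one stalk_zero using germ_eval_germ[OF Op_space P] colon_mem_Supp[OF P, of scale]
    by (simp_all add: sec_ring_simps const_section_apply)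
qed

lemma bij_betw_germ_eval:
  assumes P: "P \<in> Spec scale"
  shows "bij_betw (germ_eval scale P) (carrier (AX_stalk scale P)) (loc_carrier (colon scale P))"
proof (rule bij_betw_imageI)
  show "inj_on (germ_eval scale P) (carrier (AX_stalk scale P))"
  proof
    fix a b assume a: "a \<in> carrier (AX_stalk scale P)" and b: "b \<in> carrier (AX_stalk scale P)"
      and "germ_eval scale P a = germ_eval scale P b"
    moreover obtain U \<gamma> where "zopen scale U" "P \<in> U" "\<gamma> \<in> sections scale U"
      "a = germ (zopen scale) (sec_ring scale) (sec_res scale) P U \<gamma>"
      using a by (rule AX_stalk_carrierE)
    moreover obtain V \<delta> where "zopen scale V" "P \<in> V" "\<delta> \<in> sections scale V"
      "b = germ (zopen scale) (sec_ring scale) (sec_res scale) P V \<delta>"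
      using b by (rule AX_stalk_carrierE)
    ultimately show "a = b"
      using germ_eval_germ germ_eq_if_eval_eq by metis
  qed
  show "germ_eval scale P ` carrier (AX_stalk scale P) = loc_carrier (colon scale P)"
  proof
    show "germ_eval scale P ` carrier (AX_stalk scale P) \<subseteq> loc_carrier (colon scale P)"
      using germ_eval_mem_loc_carrier by blast
    show "loc_carrier (colon scale P) \<subseteq> germ_eval scale P ` carrier (AX_stalk scale P)"
    proof
      fix z assume "z \<in> loc_carrier (colon scale P)"
      then obtain a s where s: "s \<notin> colon scale P" and z: "z = frac (colon scale P) a s"
        using prime_ideal.loc_carrierE[OF prime_ideal_colon[OF P]] by blast
      let ?D = "basic_open scale s"
      have D: "zopen scale ?D" "P \<in> ?D" "const_section scale ?D a s \<in> sections scale ?D"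
        using zopen_basic_open P s const_section_mem_sections[OF zopen_basic_open]
        by (auto simp: basic_open_def)
      then have "z = germ_eval scale P (germ (zopen scale) (sec_ring scale) (sec_res scale) P ?D (const_section scale ?D a s))"
        using z germ_eval_germ colon_mem_Supp[OF D(2), of scale] by (simp add: const_section_apply)
      moreover have "germ (zopen scale) (sec_ring scale) (sec_res scale) P ?D (const_section scale ?D a s)
          \<in> carrier (AX_stalk scale P)"
        unfolding AX_stalk_def using presheaf_of_rings.germ_mem_stalk_carrier[OF presheaf_of_rings_sec_ring] D
        by (simp add: sec_ring_simps)
      ultimately show "z \<in> germ_eval scale P ` carrier (AX_stalk scale P)"
        by blast
    qed
  qed
qed

lemma germ_eval_ring_iso:
  assumes "P \<in> Spec scale"
  shows "germ_eval scale P \<in> ring_iso (AX_stalk scale P) (loc_ring (colon scale P))"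
  using assms germ_eval_mem_loc_carrier germ_eval_add_mult germ_eval_one_zero(1) bij_betw_germ_eval
  by (intro ring_iso_memI) (simp_all add: prime_ideal.loc_ring_simps[OF prime_ideal_colon])

lemma local_ring_AX_stalk:
  assumes P: "P \<in> Spec scale"
  shows "local_ring (AX_stalk scale P)"
proof -
  interpret presheaf_of_rings "Spec scale" "zopen scale" "sec_ring scale" "sec_res scale"
    by (rule presheaf_of_rings_sec_ring)
  interpret p: prime_ideal "colon scale P"
    by (rule prime_ideal_colon[OF P])
  have "\<one>\<^bsub>AX_stalk scale P\<^esub> \<in> carrier (AX_stalk scale P)" "\<zero>\<^bsub>AX_stalk scale P\<^esub> \<in> carrier (AX_stalk scale P)"
    unfolding AX_stalk_def stalk_one stalk_zero
    using germ_mem_stalk_carrier Op_space P ring.ring_simprules(2,6)[OF ring_F[OF Op_space]] by auto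
  then have "cring (AX_stalk scale P)"
    using cring_ring_iso[OF p.cring_loc_ring germ_eval_ring_iso[OF P]] stalk_add_closed stalk_mult_closed
      germ_eval_one_zero(2)[OF P]
    unfolding AX_stalk_def by (simp add: p.loc_ring_simps)
  then show ?thesis
    using local_ring_ring_iso germ_eval_ring_iso[OF P] p.local_ring_loc_ring by blast
qed

end

theorem corollary3p4:
  fixes sc :: "'a::comm_ring_1 \<Rightarrow> 'm::ab_group_add \<Rightarrow> 'm"
  assumes "module sc"
    and "Spec sc \<noteq> {}"
  shows "(\<forall>P \<in> Spec sc. AX_stalk sc P \<simeq> loc_ring (colon sc P)) \<and>
         locally_ringed_space (Spec sc) (zopen sc) (sec_ring sc) (sec_res sc)"
proof -
  interpret module sc
    by fact
  have "AX_stalk sc P \<simeq> loc_ring (colon sc P)" if "P \<in> Spec sc" for P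
    unfolding is_ring_iso_def using germ_eval_ring_iso[OF that] by blast
  moreover have "locally_ringed_space (Spec sc) (zopen sc) (sec_ring sc) (sec_res sc)"
    unfolding locally_ringed_space_def
    using is_topology_on_Spec sheaf_of_rings_sec_ring local_ring_AX_stalk unfolding AX_stalk_def by blast
  ultimately show ?thesis
    by blast
qed

end
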